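(* For every $\lambda>0$, \[ \lambda\,u(1_{S_{\mathrm u}},\lambda)\le\big(\mathfrak p_{i,j}(S_{\mathrm u})\big)_{(i,j)\in\mathcal{IJ}} \] (coordinatewise). Moreover, equality holds provided $\mathfrak p_{i,j}(S_{\mathrm u})=1$ for all $(i,j)\in\mathcal{IJ}$.
   Context: Let $S_1,\dots,S_N$ be disjoint compact metrizable separable spaces and $A_i$ generators of Feller semigroups (positive contraction semigroups, not necessarily conservative) on $C(S_i)$ with resolvents $R_{\lambda,i}=(\lambda-A_i)^{-1}$. Assume $A_1,\dots,A_M$ ($1\le M\le N$) are not conservative and the rest conservative. For $i\in\mathcal M=\{1,\dots,M\}$, assume the kernel of $A_i$ is trivial and there are continuous functions $\phi^{i,j}$, $j=1,\dots,\kappa(i)$, with $0\le\phi^{i,j}\le1_{S_i}$, $\lambda R_{\lambda,i}\phi^{i,j}\le\phi^{i,j}$ for all $\lambda>0$, $\lambda R_{\lambda,i}\phi^{i,j}\ne\phi^{i,j}$, and $\sum_{j=1}^{\kappa(i)}\phi^{i,j}=1_{S_i}$. Let $\ell^{i,j}_\lambda=\phi^{i,j}-\lambda R_{\lambda,i}\phi^{i,j}$, $\mathcal{IJ}=\{(i,j):i\in\mathcal M,1\le j\le\kappa(i)\}$, $\kappa=\sum_{i\in\mathcal M}\kappa(i)$. Let $S_{\mathrm u}$ be the disjoint union of the $S_i$ (functions on $S_i$ extended by zero; $f_i=f1_{S_i}$), $R^{\mathrm{du}}_\lambda f=\sum_{i=1}^NR_{\lambda,i}f_i$, and $\mathfrak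 p_{i,j}$, $(i,j)\in\mathcal{IJ}$, Borel sub-probability measures on $S_{\mathrm u}$. Let $N_\lambda:\mathbb R^\kappa\to\mathbb R^\kappa$, $(N_\lambda w)_{i,j}=\sum_{k\in\mathcal M}\sum_{l=1}^{\kappa(k)}w_{k,l}\int_{S_k}\ell^{k,l}_\lambda\,\mathrm d\mathfrak p_{i,j}$; $\|N_\lambda\|<1$ and $M_\lambda=I-N_\lambda$ is invertible. For $f\in C(S_{\mathrm u})$, $v(f,\lambda)=\big(\int_{S_{\mathrm u}}R^{\mathrm{du}}_\lambda f\,\mathrm d\mathfrak p_{i,j}\big)_{(i,j)\in\mathcal{IJ}}$ and $u(f,\lambda)=M_\lambda^{-1}v(f,\lambda)$, i.e. the unique solution of $u=v(f,\lambda)+N_\lambda u$. *)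

theory Defs
  imports "HOL-Probability.Probability"
begin

text \<open>C(S): continuous real functions on S, represented as functions on the ambient
  type that vanish outside S (the "extension by zero" convention of the paper).\<close>
definition Cfun :: "'a::topological_space set \<Rightarrow> ('a \<Rightarrow> real) set" where
  "Cfun S = {f. continuous_on S f \<and> (\<forall>x. x \<notin> S \<longrightarrow> f x = 0)}"

definition feller_semigroup ::
  "'a::topological_space set \<Rightarrow> (real \<Rightarrow> ('a \<Rightarrow> real) \<Rightarrow> ('a \<Rightarrow> real)) \<Rightarrow> bool" where
  "feller_semigroup S T \<longleftrightarrow>
     (\<forall>t\<ge>0. \<forall>f\<in>Cfun S. T t f \<in> Cfun S) \<and>
     (\<forall>t\<ge>0. \<forall>f\<in>Cfun S. \<forall>g\<in>Cfun S. \<forall>a b.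
        T t (\<lambda>x. a * f x + b * g x) = (\<lambda>x. a * T t f x + b * T t g x)) \<and>
     (\<forall>t\<ge>0. \<forall>f\<in>Cfun S. (\<forall>x\<in>S. 0 \<le> f x) \<longrightarrow> (\<forall>x\<in>S. 0 \<le> T t f x)) \<and>
     (\<forall>t\<ge>0. \<forall>f\<in>Cfun S. \<forall>c. (\<forall>x\<in>S. \<bar>f x\<bar> \<le> c) \<longrightarrow> (\<forall>x\<in>S. \<bar>T t f x\<bar> \<le> c)) \<and>
     (\<forall>f\<in>Cfun S. T 0 f = f) \<and>
     (\<forall>s\<ge>0. \<forall>t\<ge>0. \<forall>f\<in>Cfun S. T (s + t) f = T s (T t f)) \<and>
     (\<forall>f\<in>Cfun S. \<forall>e>0. \<exists>d>0. \<forall>t. 0 < t \<and> t < d \<longrightarrow> (\<forall>x\<in>S. \<bar>T t f x - f x\<bar> \<le> e))"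

definition unif_deriv0 ::
  "'a set \<Rightarrow> (real \<Rightarrow> ('a \<Rightarrow> real) \<Rightarrow> ('a \<Rightarrow> real)) \<Rightarrow> ('a \<Rightarrow> real) \<Rightarrow> ('a \<Rightarrow> real) \<Rightarrow> bool" where
  "unif_deriv0 S T f g \<longleftrightarrow>
     (\<forall>e>0. \<exists>d>0. \<forall>t. 0 < t \<and> t < d \<longrightarrow> (\<forall>x\<in>S. \<bar>(T t f x - f x) / t - g x\<bar> \<le> e))"

definition generates ::
  "'a::topological_space set \<Rightarrow> (real \<Rightarrow> ('a \<Rightarrow> real) \<Rightarrow> ('a \<Rightarrow> real))
     \<Rightarrow> (('a \<Rightarrow> real) \<Rightarrow> ('a \<Rightarrow> real)) \<Rightarrow> ('a \<Rightarrow> real) set \<Rightarrow> bool" where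
  "generates S T A D \<longleftrightarrow>
     D = {f \<in> Cfun S. \<exists>g\<in>Cfun S. unif_deriv0 S T f g} \<and>
     (\<forall>f\<in>D. A f \<in> Cfun S \<and> unif_deriv0 S T f (A f))"

definition feller_generator ::
  "'a::topological_space set \<Rightarrow> (('a \<Rightarrow> real) \<Rightarrow> ('a \<Rightarrow> real)) \<Rightarrow> ('a \<Rightarrow> real) set \<Rightarrow> bool" where
  "feller_generator S A D \<longleftrightarrow> (\<exists>T. feller_semigroup S T \<and> generates S T A D)"

definition conservative_generator ::
  "'a::topological_space set \<Rightarrow> (('a \<Rightarrow> real) \<Rightarrow> ('a \<Rightarrow> real)) \<Rightarrow> ('a \<Rightarrow> real) set \<Rightarrow> bool" where
  "conservative_generator S A D \<longleftrightarrow>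
     (\<exists>T. feller_semigroup S T \<and> generates S T A D \<and> (\<forall>t\<ge>0. T t (indicator S) = indicator S))"

definition resolvent ::
  "(('a \<Rightarrow> real) \<Rightarrow> ('a \<Rightarrow> real)) \<Rightarrow> ('a \<Rightarrow> real) set \<Rightarrow> real \<Rightarrow> ('a \<Rightarrow> real) \<Rightarrow> ('a \<Rightarrow> real)" where
  "resolvent A D lam f = (THE g. g \<in> D \<and> (\<lambda>x. lam * g x - A g x) = f)"

definition IJ :: "nat \<Rightarrow> (nat \<Rightarrow> nat) \<Rightarrow> (nat \<times> nat) set" where
  "IJ M \<kappa> = {(i, j). i \<in> {1..M} \<and> j \<in> {1..\<kappa> i}}"

definition ell ::
  "(nat \<Rightarrow> ('a \<Rightarrow> real) \<Rightarrow> ('a \<Rightarrow> real)) \<Rightarrow> (nat \<Rightarrow> ('a \<Rightarrow> real) set)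
     \<Rightarrow> (nat \<Rightarrow> nat \<Rightarrow> 'a \<Rightarrow> real) \<Rightarrow> nat \<Rightarrow> nat \<Rightarrow> real \<Rightarrow> 'a \<Rightarrow> real" where
  "ell A D \<phi> i j lam = (\<lambda>x. \<phi> i j x - lam * resolvent (A i) (D i) lam (\<phi> i j) x)"

definition Nop ::
  "(nat \<Rightarrow> 'a::topological_space set) \<Rightarrow> (nat \<Rightarrow> ('a \<Rightarrow> real) \<Rightarrow> ('a \<Rightarrow> real)) \<Rightarrow> (nat \<Rightarrow> ('a \<Rightarrow> real) set)
     \<Rightarrow> nat \<Rightarrow> (nat \<Rightarrow> nat) \<Rightarrow> (nat \<Rightarrow> nat \<Rightarrow> 'a \<Rightarrow> real) \<Rightarrow> (nat \<times> nat \<Rightarrow> 'a measure)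
     \<Rightarrow> real \<Rightarrow> (nat \<times> nat \<Rightarrow> real) \<Rightarrow> (nat \<times> nat \<Rightarrow> real)" where
  "Nop S A D M \<kappa> \<phi> p lam w = (\<lambda>ij. if ij \<in> IJ M \<kappa> then
      (\<Sum>k\<in>{1..M}. \<Sum>l\<in>{1..\<kappa> k}. w (k, l) * (LINT x:S k|p ij. ell A D \<phi> k l lam x))
    else 0)"

definition Rdu ::
  "(nat \<Rightarrow> 'a set) \<Rightarrow> (nat \<Rightarrow> ('a \<Rightarrow> real) \<Rightarrow> ('a \<Rightarrow> real)) \<Rightarrow> (nat \<Rightarrow> ('a \<Rightarrow> real) set)
     \<Rightarrow> nat \<Rightarrow> real \<Rightarrow> ('a \<Rightarrow> real) \<Rightarrow> 'a \<Rightarrow> real" where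
  "Rdu S A D Nn lam f = (\<lambda>x. \<Sum>i\<in>{1..Nn}. resolvent (A i) (D i) lam (\<lambda>y. indicator (S i) y * f y) x)"

definition vvec ::
  "(nat \<Rightarrow> 'a::topological_space set) \<Rightarrow> (nat \<Rightarrow> ('a \<Rightarrow> real) \<Rightarrow> ('a \<Rightarrow> real)) \<Rightarrow> (nat \<Rightarrow> ('a \<Rightarrow> real) set)
     \<Rightarrow> nat \<Rightarrow> nat \<Rightarrow> (nat \<Rightarrow> nat) \<Rightarrow> (nat \<times> nat \<Rightarrow> 'a measure)
     \<Rightarrow> ('a \<Rightarrow> real) \<Rightarrow> real \<Rightarrow> (nat \<times> nat \<Rightarrow> real)" where
  "vvec S A D Nn M \<kappa> p f lam = (\<lambda>ij. if ij \<in> IJ M \<kappa> then integral\<^sup>L (p ij) (Rdu S A D Nn lam f) else 0)"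

definition uvec ::
  "(nat \<Rightarrow> 'a::topological_space set) \<Rightarrow> (nat \<Rightarrow> ('a \<Rightarrow> real) \<Rightarrow> ('a \<Rightarrow> real)) \<Rightarrow> (nat \<Rightarrow> ('a \<Rightarrow> real) set)
     \<Rightarrow> nat \<Rightarrow> nat \<Rightarrow> (nat \<Rightarrow> nat) \<Rightarrow> (nat \<Rightarrow> nat \<Rightarrow> 'a \<Rightarrow> real) \<Rightarrow> (nat \<times> nat \<Rightarrow> 'a measure)
     \<Rightarrow> ('a \<Rightarrow> real) \<Rightarrow> real \<Rightarrow> (nat \<times> nat \<Rightarrow> real)" where
  "uvec S A D Nn M \<kappa> \<phi> p f lam = (THE u. (\<forall>ij. ij \<notin> IJ M \<kappa> \<longrightarrow> u ij = 0) \<and>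
      (\<forall>ij\<in>IJ M \<kappa>. u ij = vvec S A D Nn M \<kappa> p f lam ij + Nop S A D M \<kappa> \<phi> p lam u ij))"

definition supnorm_on :: "(nat \<times> nat) set \<Rightarrow> (nat \<times> nat \<Rightarrow> real) \<Rightarrow> real" where
  "supnorm_on I w = Max (insert 0 ((\<lambda>ij. \<bar>w ij\<bar>) ` I))"

end

theory Submission
  imports Defs
begin

text \<open>
  Put \<open>q\<^sub>i\<^sub>j = p\<^sub>i\<^sub>j(S\<^sub>u)\<close>. A conservative generator has \<open>\<lambda> R\<^sub>\<lambda> 1 = 1\<close>, and for a
  non-conservative one the partition \<open>1 = \<Sum>\<^sub>j \<phi>\<^sup>i\<^sup>j\<close> gives \<open>\<lambda> R\<^sub>\<lambda> 1 = 1 - \<Sum>\<^sub>j ell\<^sup>i\<^sup>j\<close>.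
  Integrating against \<open>p\<^sub>i\<^sub>j\<close> yields \<open>\<lambda> v(1,\<lambda>) = q - N\<^sub>\<lambda> 1\<close>, so \<open>w = \<lambda> u(1,\<lambda>) - 1\<close>
  solves \<open>w = (q - 1) + N\<^sub>\<lambda> w\<close>. The matrix \<open>N\<^sub>\<lambda>\<close> has nonnegative entries (\<open>ell \<ge> 0\<close>
  because \<open>\<lambda> R\<^sub>\<lambda> \<phi> \<le> \<phi>\<close>) and is a strict sup-norm contraction, so a maximum principle
  gives \<open>w \<le> 0\<close> and hence \<open>\<lambda> u = q + N\<^sub>\<lambda> w \<le> q\<close>; if \<open>q = 1\<close>, then \<open>w\<close> is a fixed point
  of \<open>N\<^sub>\<lambda>\<close> and vanishes.

  Resolvents are only given implicitly, as the unique solution of \<open>\<lambda> g - A g = f\<close>. Uniqueness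
  is dissipativity; existence is the range condition of Hille-Yosida theory, obtained from the
  Laplace transform \<open>\<integral>\<^sub>0\<^sup>\<infinity> exp(-\<lambda> t) T\<^sub>t f dt\<close>, where \<open>T\<^sub>h\<close> is moved inside the
  integral by approximating it with Riemann sums.
\<close>

lemma eq_0_if_abs_le_all_pos:
  fixes a :: real
  assumes "\<And>e. e > 0 \<Longrightarrow> \<bar>a\<bar> \<le> e"
  shows "a = 0"
  using assms[of "\<bar>a\<bar> / 2"] by (cases "a = 0") auto

lemma Cfun_zero [simp]: "(\<lambda>x. 0) \<in> Cfun S"
  by (simp add: Cfun_def)

lemma Cfun_lincomb: "f \<in> Cfun S \<Longrightarrow> g \<in> Cfun S \<Longrightarrow> (\<lambda>x. a * f x + b * g x) \<in> Cfun S"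
  by (auto simp: Cfun_def intro!: continuous_intros)

lemma Cfun_scale: "f \<in> Cfun S \<Longrightarrow> (\<lambda>x. c * f x) \<in> Cfun S"
  using Cfun_lincomb[of f S f c 0] by simp

lemma Cfun_diff: "f \<in> Cfun S \<Longrightarrow> g \<in> Cfun S \<Longrightarrow> (\<lambda>x. f x - g x) \<in> Cfun S"
  using Cfun_lincomb[of f S g 1 "-1"] by simp

lemma Cfun_sum: "finite I \<Longrightarrow> (\<And>i. i \<in> I \<Longrightarrow> f i \<in> Cfun S) \<Longrightarrow> (\<lambda>x. \<Sum>i\<in>I. f i x) \<in> Cfun S"
  by (auto simp: Cfun_def intro!: continuous_intros)

lemma Cfun_indicator: "(indicator S :: 'a::topological_space \<Rightarrow> real) \<in> Cfun S"
proof -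
  have "continuous_on S (indicator S :: 'a \<Rightarrow> real) = continuous_on S (\<lambda>x. 1::real)"
    by (rule continuous_on_cong) auto
  then show ?thesis by (auto simp: Cfun_def)
qed

lemma Cfun_outside: "f \<in> Cfun S \<Longrightarrow> x \<notin> S \<Longrightarrow> f x = 0"
  by (simp add: Cfun_def)

lemma Cfun_bounded:
  assumes "compact S" "f \<in> Cfun S"
  obtains B where "B \<ge> 0" "\<And>x. \<bar>f x\<bar> \<le> B"
proof -
  have "compact (f ` S)" using assms by (intro compact_continuous_image) (auto simp: Cfun_def)
  then obtain B where B: "\<forall>y\<in>f ` S. norm y \<le> B" using compact_imp_bounded bounded_iff by metis
  have "\<bar>f x\<bar> \<le> max B 0" for x
    using B assms(2) by (cases "x \<in> S") (auto simp: Cfun_def)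
  then show ?thesis using that[of "max B 0"] by simp
qed

lemma Cfun_uniform_approx:
  fixes S :: "'a::metric_space set"
  assumes "\<And>e. e > 0 \<Longrightarrow> \<exists>f\<in>Cfun S. \<forall>x. \<bar>g x - f x\<bar> \<le> e"
  shows "g \<in> Cfun S"
proof -
  have "g x = 0" if "x \<notin> S" for x
  proof (rule eq_0_if_abs_le_all_pos)
    fix e :: real assume "e > 0"
    then obtain f where "f \<in> Cfun S" "\<forall>x. \<bar>g x - f x\<bar> \<le> e" using assms by blast
    then show "\<bar>g x\<bar> \<le> e" using that by (metis Cfun_outside diff_zero)
  qed
  moreover have "continuous_on S g"
    unfolding Elementary_Metric_Spaces.continuous_on_iff
  proof (intro ballI allI impI)
    fix x e assume x: "x \<in> S" and e: "(e::real) > 0"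
    have e3: "e/3 > 0" using e by simp
    obtain f where f: "f \<in> Cfun S" "\<forall>x. \<bar>g x - f x\<bar> \<le> e/3" using assms[OF e3] by auto
    then have "continuous_on S f" by (simp add: Cfun_def)
    then obtain d where d: "d > 0" "\<forall>x'\<in>S. dist x' x < d \<longrightarrow> dist (f x') (f x) < e/3"
      using x e3 unfolding Elementary_Metric_Spaces.continuous_on_iff by blast
    have "dist (g x') (g x) < e" if "x' \<in> S" "dist x' x < d" for x'
    proof -
      have "\<bar>f x' - f x\<bar> < e/3" using d(2) that by (simp add: dist_real_def)
      moreover have "\<bar>g x' - f x'\<bar> \<le> e/3" "\<bar>g x - f x\<bar> \<le> e/3" using f(2) by auto
      ultimately show ?thesis unfolding dist_real_def by arith
    qed
    then show "\<exists>d>0. \<forall>x'\<in>S. dist x' x < d \<longrightarrow> dist (g x') (g x) < e" using d(1) by blast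
  qed
  ultimately show ?thesis by (auto simp: Cfun_def)
qed

locale feller =
  fixes S :: "'a::metric_space set" and T :: "real \<Rightarrow> ('a \<Rightarrow> real) \<Rightarrow> ('a \<Rightarrow> real)"
  assumes semigroup: "feller_semigroup S T"
begin

lemma Cfun_closed: "t \<ge> 0 \<Longrightarrow> f \<in> Cfun S \<Longrightarrow> T t f \<in> Cfun S"
  using semigroup by (simp add: feller_semigroup_def)

lemma lincomb: "t \<ge> 0 \<Longrightarrow> f \<in> Cfun S \<Longrightarrow> g \<in> Cfun S \<Longrightarrow>
  T t (\<lambda>x. a * f x + b * g x) = (\<lambda>x. a * T t f x + b * T t g x)"
  using semigroup by (simp add: feller_semigroup_def)

lemma diff: "t \<ge> 0 \<Longrightarrow> f \<in> Cfun S \<Longrightarrow> g \<in> Cfun S \<Longrightarrow>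
  T t (\<lambda>x. f x - g x) = (\<lambda>x. T t f x - T t g x)"
  using lincomb[of t f g 1 "-1"] by simp

lemma scale: "t \<ge> 0 \<Longrightarrow> f \<in> Cfun S \<Longrightarrow> T t (\<lambda>x. c * f x) = (\<lambda>x. c * T t f x)"
  using lincomb[of t f f c 0] by simp

lemma zero: "t \<ge> 0 \<Longrightarrow> T t (\<lambda>x. 0) = (\<lambda>x. 0)"
  using scale[of t "\<lambda>x. 0" 0] by simp

lemma sum:
  assumes "t \<ge> 0" "finite I" "\<And>i. i \<in> I \<Longrightarrow> f i \<in> Cfun S"
  shows "T t (\<lambda>x. \<Sum>i\<in>I. f i x) = (\<lambda>x. \<Sum>i\<in>I. T t (f i) x)"
  using assms(2,3)
proof (induction I rule: finite_induct)
  case (insert i I)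
  then show ?case
    using lincomb[OF assms(1), of "f i" "\<lambda>x. \<Sum>i\<in>I. f i x" 1 1] Cfun_sum[of I f S] by simp
qed (use zero assms(1) in simp)

lemma contraction:
  "t \<ge> 0 \<Longrightarrow> f \<in> Cfun S \<Longrightarrow> (\<And>x. x \<in> S \<Longrightarrow> \<bar>f x\<bar> \<le> c) \<Longrightarrow> 0 \<le> c \<Longrightarrow> \<bar>T t f x\<bar> \<le> c"
  using semigroup Cfun_closed[of t f] by (cases "x \<in> S") (auto simp: feller_semigroup_def Cfun_def)

lemma contraction_diff:
  assumes "t \<ge> 0" "f \<in> Cfun S" "g \<in> Cfun S" "\<And>x. x \<in> S \<Longrightarrow> \<bar>f x - g x\<bar> \<le> c" "0 \<le> c"
  shows "\<bar>T t f x - T t g x\<bar> \<le> c"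
  using contraction[OF assms(1) Cfun_diff[OF assms(2,3)], of c x] assms diff by simp

lemma at_0: "f \<in> Cfun S \<Longrightarrow> T 0 f = f"
  using semigroup by (simp add: feller_semigroup_def)

lemma semigroup_law: "s \<ge> 0 \<Longrightarrow> t \<ge> 0 \<Longrightarrow> f \<in> Cfun S \<Longrightarrow> T (s + t) f = T s (T t f)"
  using semigroup by (simp add: feller_semigroup_def)

lemma strongly_continuous:
  "f \<in> Cfun S \<Longrightarrow> e > 0 \<Longrightarrow> \<exists>d>0. \<forall>t. 0 < t \<and> t < d \<longrightarrow> (\<forall>x\<in>S. \<bar>T t f x - f x\<bar> \<le> e)"
  using semigroup by (simp add: feller_semigroup_def)

lemma uniformly_continuous_in_time:
  assumes "f \<in> Cfun S" "e > 0"
  obtains d where "d > 0" "\<And>s t x. 0 \<le> s \<Longrightarrow> 0 \<le> t \<Longrightarrow> \<bar>s - t\<bar> < d \<Longrightarrow> \<bar>T s f x - T t f x\<bar> \<le> e"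
proof -
  obtain d where d: "d > 0" "\<forall>h. 0 < h \<and> h < d \<longrightarrow> (\<forall>x\<in>S. \<bar>T h f x - f x\<bar> \<le> e)"
    using strongly_continuous[OF assms] by blast
  have ordered: "\<bar>T s f x - T t f x\<bar> \<le> e" if "0 \<le> t" "t < s" "s - t < d" for s t x
  proof -
    define h where "h = s - t"
    have h: "0 < h" "h < d" "s = t + h" using that by (auto simp: h_def)
    have "T s f = T t (T h f)" using semigroup_law[of t h f] h assms(1) that(1) by simp
    then show ?thesis
      using contraction_diff[OF that(1) Cfun_closed[OF _ assms(1)] assms(1), of h e x] d h assms(2)
      by auto
  qed
  have "\<bar>T s f x - T t f x\<bar> \<le> e" if "0 \<le> s" "0 \<le> t" "\<bar>s - t\<bar> < d" for s t x
    using ordered[of t s x] ordered[of s t x] that assms(2)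
    by (cases s t rule: linorder_cases) (auto simp: abs_minus_commute)
  then show ?thesis using that d(1) by blast
qed

lemma unif_deriv0_unique:
  assumes "unif_deriv0 S T f g1" "unif_deriv0 S T f g2" "x \<in> S"
  shows "g1 x = g2 x"
proof (rule eq_0_if_abs_le_all_pos[of "g1 x - g2 x", simplified])
  fix e :: real assume "e > 0"
  obtain d1 where d1: "d1 > 0" "\<forall>t. 0 < t \<and> t < d1 \<longrightarrow> (\<forall>x\<in>S. \<bar>(T t f x - f x) / t - g1 x\<bar> \<le> e/2)"
    using assms(1) \<open>e > 0\<close> unfolding unif_deriv0_def by (meson half_gt_zero)
  obtain d2 where d2: "d2 > 0" "\<forall>t. 0 < t \<and> t < d2 \<longrightarrow> (\<forall>x\<in>S. \<bar>(T t f x - f x) / t - g2 x\<bar> \<le> e/2)"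
    using assms(2) \<open>e > 0\<close> unfolding unif_deriv0_def by (meson half_gt_zero)
  define t where "t = min d1 d2 / 2"
  have "0 < t" "t < d1" "t < d2" using d1 d2 by (auto simp: t_def)
  then have "\<bar>(T t f x - f x) / t - g1 x\<bar> \<le> e/2" "\<bar>(T t f x - f x) / t - g2 x\<bar> \<le> e/2"
    using d1(2) d2(2) assms(3) by auto
  then show "\<bar>g1 x - g2 x\<bar> \<le> e" by linarith
qed

lemma unif_deriv0_lincomb:
  assumes "f1 \<in> Cfun S" "f2 \<in> Cfun S" "unif_deriv0 S T f1 g1" "unif_deriv0 S T f2 g2"
  shows "unif_deriv0 S T (\<lambda>x. a * f1 x + b * f2 x) (\<lambda>x. a * g1 x + b * g2 x)"
  unfolding unif_deriv0_def
proof (intro allI impI)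
  fix e :: real assume "e > 0"
  define e' where "e' = e / (\<bar>a\<bar> + \<bar>b\<bar> + 1)"
  have e': "e' > 0" "(\<bar>a\<bar> + \<bar>b\<bar>) * e' \<le> e"
    using \<open>e > 0\<close> by (auto simp: e'_def field_simps add_pos_nonneg)
  obtain d1 where d1: "d1 > 0" "\<forall>t. 0 < t \<and> t < d1 \<longrightarrow> (\<forall>x\<in>S. \<bar>(T t f1 x - f1 x) / t - g1 x\<bar> \<le> e')"
    using assms(3) e' unfolding unif_deriv0_def by blast
  obtain d2 where d2: "d2 > 0" "\<forall>t. 0 < t \<and> t < d2 \<longrightarrow> (\<forall>x\<in>S. \<bar>(T t f2 x - f2 x) / t - g2 x\<bar> \<le> e')"
    using assms(4) e' unfolding unif_deriv0_def by blast
  have "\<bar>(T t (\<lambda>x. a * f1 x + b * f2 x) x - (a * f1 x + b * f2 x)) / t - (a * g1 x + b * g2 x)\<bar> \<le> e"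
    if t: "0 < t" "t < min d1 d2" and x: "x \<in> S" for t x
  proof -
    define q1 where "q1 = (T t f1 x - f1 x) / t - g1 x"
    define q2 where "q2 = (T t f2 x - f2 x) / t - g2 x"
    have "\<bar>q1\<bar> \<le> e'" "\<bar>q2\<bar> \<le> e'" using d1 d2 t x by (auto simp: q1_def q2_def)
    then have "\<bar>a\<bar> * \<bar>q1\<bar> + \<bar>b\<bar> * \<bar>q2\<bar> \<le> (\<bar>a\<bar> + \<bar>b\<bar>) * e'"
      by (simp add: distrib_right add_mono mult_left_mono)
    then have "\<bar>a * q1 + b * q2\<bar> \<le> (\<bar>a\<bar> + \<bar>b\<bar>) * e'"
      using abs_triangle_ineq[of "a * q1" "b * q2"] by (simp add: abs_mult)
    moreover have "(T t (\<lambda>x. a * f1 x + b * f2 x) x - (a * f1 x + b * f2 x)) / t - (a * g1 x + b * g2 x)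
        = a * q1 + b * q2"
      using lincomb[of t f1 f2 a b] assms t by (simp add: q1_def q2_def field_simps)
    ultimately show ?thesis using e'(2) by linarith
  qed
  then show "\<exists>d>0. \<forall>t. 0 < t \<and> t < d \<longrightarrow> (\<forall>x\<in>S. \<bar>(T t (\<lambda>x. a * f1 x + b * f2 x) x
      - (a * f1 x + b * f2 x)) / t - (a * g1 x + b * g2 x)\<bar> \<le> e)"
    using d1(1) d2(1) by (intro exI[of _ "min d1 d2"]) auto
qed

end

section \<open>Generators and resolvents\<close>

locale feller_generator_on = feller +
  fixes A D
  assumes generates: "generates S T A D"
begin

lemma domain_Cfun: "f \<in> D \<Longrightarrow> f \<in> Cfun S"
  using generates by (auto simp: generates_def)

lemma generator_Cfun: "f \<in> D \<Longrightarrow> A f \<in> Cfun S"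
  using generates by (auto simp: generates_def)

lemma generator_deriv: "f \<in> D \<Longrightarrow> unif_deriv0 S T f (A f)"
  using generates by (auto simp: generates_def)

lemma domainI:
  assumes "f \<in> Cfun S" "g \<in> Cfun S" "unif_deriv0 S T f g"
  shows "f \<in> D" "A f = g"
proof -
  show fD: "f \<in> D" using generates assms by (auto simp: generates_def)
  have "A f x = g x" for x
    using unif_deriv0_unique[OF generator_deriv[OF fD] assms(3)]
      Cfun_outside[OF generator_Cfun[OF fD]] Cfun_outside[OF assms(2)]
    by (cases "x \<in> S") auto
  then show "A f = g" by auto
qed

lemma domain_lincomb:
  assumes "f1 \<in> D" "f2 \<in> D"
  shows "(\<lambda>x. a * f1 x + b * f2 x) \<in> D" "A (\<lambda>x. a * f1 x + b * f2 x) = (\<lambda>x. a * A f1 x + b * A f2 x)"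
  using domainI[OF Cfun_lincomb[OF domain_Cfun[OF assms(1)] domain_Cfun[OF assms(2)]]
      Cfun_lincomb[OF generator_Cfun[OF assms(1)] generator_Cfun[OF assms(2)]]
      unif_deriv0_lincomb[OF domain_Cfun[OF assms(1)] domain_Cfun[OF assms(2)]
        generator_deriv[OF assms(1)] generator_deriv[OF assms(2)]]] .

lemma domain_sum:
  assumes "finite I" "\<And>i. i \<in> I \<Longrightarrow> f i \<in> D"
  shows "(\<lambda>x. \<Sum>i\<in>I. f i x) \<in> D \<and> A (\<lambda>x. \<Sum>i\<in>I. f i x) = (\<lambda>x. \<Sum>i\<in>I. A (f i) x)"
  using assms
proof (induction I rule: finite_induct)
  case empty
  have "unif_deriv0 S T (\<lambda>x. 0) (\<lambda>x. 0)"
    unfolding unif_deriv0_def using zero by (auto intro: exI[of _ 1])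
  then show ?case using domainI[OF Cfun_zero Cfun_zero] by simp
next
  case (insert i I)
  then show ?case using domain_lincomb[of "f i" "\<lambda>x. \<Sum>i\<in>I. f i x" 1 1] by simp
qed

text \<open>At a point where \<open>\<bar>f\<bar>\<close> is maximal, contractivity forces \<open>f \<cdot> A f \<le> 0\<close>, which is
  incompatible with \<open>A f = \<lambda> f \<noteq> 0\<close>.\<close>
lemma dissipative:
  assumes "compact S" "lam > 0" "f \<in> D" "\<And>x. x \<in> S \<Longrightarrow> lam * f x - A f x = 0"
  shows "f = (\<lambda>x. 0)"
proof (rule ccontr)
  assume "f \<noteq> (\<lambda>x. 0)"
  then obtain x1 where "f x1 \<noteq> 0" by auto
  have fC: "f \<in> Cfun S" using domain_Cfun assms by auto
  then have "x1 \<in> S" using \<open>f x1 \<noteq> 0\<close> Cfun_outside by blast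
  have "continuous_on S (\<lambda>x. \<bar>f x\<bar>)" using fC by (auto simp: Cfun_def intro!: continuous_intros)
  then obtain x0 where x0: "x0 \<in> S" "\<forall>y\<in>S. \<bar>f y\<bar> \<le> \<bar>f x0\<bar>"
    using continuous_attains_sup[OF assms(1)] \<open>x1 \<in> S\<close> by blast
  define m where "m = \<bar>f x0\<bar>"
  have "m > 0" using x0 \<open>x1 \<in> S\<close> \<open>f x1 \<noteq> 0\<close> unfolding m_def by force
  have Af: "A f x0 = lam * f x0" using assms(4) x0 by auto
  have "lam * m / 2 > 0" using \<open>m > 0\<close> assms(2) by simp
  then obtain d where d: "d > 0" "\<forall>t. 0 < t \<and> t < d \<longrightarrow> (\<forall>x\<in>S. \<bar>(T t f x - f x) / t - A f x\<bar> \<le> lam * m / 2)"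
    using generator_deriv[OF assms(3)] unfolding unif_deriv0_def by blast
  define t where "t = d / 2"
  have t: "0 < t" "t < d" using d by (auto simp: t_def)
  define q where "q = (T t f x0 - f x0) / t"
  have "\<bar>(T t f x0 - f x0) / t - A f x0\<bar> \<le> lam * m / 2" using d(2) t x0(1) by blast
  then have q_close: "\<bar>q - lam * f x0\<bar> \<le> lam * m / 2" using Af by (simp add: q_def)
  have "\<bar>T t f x0\<bar> \<le> m" using contraction[OF _ fC, of t m x0] t x0 by (auto simp: m_def)
  then have "f x0 * T t f x0 \<le> m * m"
    by (metis abs_ge_self abs_mult m_def abs_ge_zero mult_left_mono order_trans)
  then have "f x0 * q \<le> 0"
    using t by (simp add: q_def m_def algebra_simps abs_mult_self_eq divide_nonpos_pos)
  then have "lam * (m * m) \<le> - (f x0 * (q - lam * f x0))"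
    by (simp add: m_def algebra_simps abs_mult_self_eq)
  also have "\<dots> \<le> \<bar>f x0\<bar> * \<bar>q - lam * f x0\<bar>" by (metis abs_ge_minus_self abs_mult)
  also have "\<dots> \<le> m * (lam * m / 2)" using q_close unfolding m_def by (intro mult_left_mono) auto
  finally show False using \<open>m > 0\<close> assms(2) by simp
qed

lemma resolvent_eqI:
  assumes "compact S" "lam > 0" "g \<in> D" "(\<lambda>x. lam * g x - A g x) = f"
  shows "resolvent A D lam f = g"
  unfolding resolvent_def
proof (rule the_equality)
  show "g \<in> D \<and> (\<lambda>x. lam * g x - A g x) = f" using assms by simp
  fix g' assume g': "g' \<in> D \<and> (\<lambda>x. lam * g' x - A g' x) = f"
  define h where "h = (\<lambda>x. 1 * g' x + (-1) * g x)"
  have h: "h \<in> D" "A h = (\<lambda>x. 1 * A g' x + (-1) * A g x)"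
    using domain_lincomb[of g' g 1 "-1"] g' assms(3) by (auto simp: h_def)
  have "lam * h x - A h x = 0" for x
    using g' assms(4) h(2) by (auto simp: h_def algebra_simps dest!: fun_cong[of _ _ x])
  then have "h = (\<lambda>x. 0)" using dissipative[OF assms(1,2) h(1)] by simp
  then show "g' = g" by (auto simp: h_def fun_eq_iff dest: fun_cong)
qed

end

lemma resolvent_conservative:
  fixes S :: "'a::metric_space set"
  assumes "compact S" "lam > 0" "conservative_generator S A D"
  shows "resolvent A D lam (indicator S) = (\<lambda>x. indicator S x / lam)"
proof -
  obtain T where "feller_semigroup S T" "generates S T A D"
    and preserves: "\<forall>t\<ge>0. T t (indicator S) = indicator S"
    using assms(3) unfolding conservative_generator_def by blast
  then interpret feller_generator_on S T A D by unfold_locales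
  define g where "g = (\<lambda>x. (1/lam) * (indicator S x :: real))"
  have gC: "g \<in> Cfun S" unfolding g_def using Cfun_scale[OF Cfun_indicator] .
  have "T t g = g" if "t > 0" for t
    using scale[of t "indicator S" "1/lam"] preserves Cfun_indicator[of S] that by (simp add: g_def)
  then have "unif_deriv0 S T g (\<lambda>x. 0)"
    unfolding unif_deriv0_def by (auto intro: exI[of _ 1])
  then have gD: "g \<in> D" and Ag: "A g = (\<lambda>x. 0)" by (rule domainI[OF gC Cfun_zero])+
  have "(\<lambda>x. lam * g x - A g x) = indicator S"
    using Ag assms(2) by (simp add: g_def fun_eq_iff)
  then have "resolvent A D lam (indicator S) = g" by (rule resolvent_eqI[OF assms(1,2) gD])
  then show ?thesis by (simp add: g_def)
qed

section \<open>Riemann sums of equicontinuous families\<close>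

definition riemann_sum :: "real \<Rightarrow> real \<Rightarrow> nat \<Rightarrow> (real \<Rightarrow> real) \<Rightarrow> real" where
  "riemann_sum a b n F = (\<Sum>k<n. (b - a) / n * F (a + real k * ((b - a) / n)))"

definition uniformly_equicontinuous_on :: "real set \<Rightarrow> (real \<Rightarrow> 'b \<Rightarrow> real) \<Rightarrow> bool" where
  "uniformly_equicontinuous_on K F \<longleftrightarrow>
     (\<forall>e>0. \<exists>d>0. \<forall>s\<in>K. \<forall>t\<in>K. \<bar>s - t\<bar> < d \<longrightarrow> (\<forall>x. \<bar>F s x - F t x\<bar> \<le> e))"

lemma riemann_point_in_interval:
  assumes "a \<le> b" "k < (n::nat)"
  shows "a + real k * ((b - a) / n) \<in> {a..b}"
proof -
  have "real k * ((b - a) / n) \<le> real n * ((b - a) / n)"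
    using assms by (intro mult_right_mono) auto
  then show ?thesis using assms by simp
qed

lemma riemann_sum_error:
  fixes F :: "real \<Rightarrow> real"
  assumes ab: "a \<le> b" and cont: "continuous_on {a..b} F" and n: "n > 0"
    and modulus: "\<And>s t. s \<in> {a..b} \<Longrightarrow> t \<in> {a..b} \<Longrightarrow> \<bar>s - t\<bar> \<le> (b - a) / n \<Longrightarrow> \<bar>F s - F t\<bar> \<le> e"
  shows "\<bar>integral {a..b} F - riemann_sum a b n F\<bar> \<le> (b - a) * e"
proof -
  define h where "h = (b - a) / n"
  have h0: "h \<ge> 0" using ab n by (simp add: h_def)
  have e0: "e \<ge> 0" using modulus[of a a] ab h0 by (auto simp: h_def)
  have hn: "real n * h = b - a" using n by (simp add: h_def)
  have "\<bar>integral {a..a + m * h} F - (\<Sum>k<m. h * F (a + real k * h))\<bar> \<le> m * h * e"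
    if "m \<le> n" for m :: nat
    using that
  proof (induction m)
    case (Suc m)
    define c where "c = a + m * h"
    have c: "a \<le> c" "c \<le> c + h" "c + h \<le> b" "a + Suc m * h = c + h"
      using h0 mult_right_mono[OF of_nat_mono[OF Suc.prems] h0] hn by (auto simp: c_def algebra_simps)
    have int_ch: "F integrable_on {a..c + h}"
      using cont c by (intro integrable_continuous_interval) (auto intro: continuous_on_subset)
    have int_c: "F integrable_on {c..c + h}"
      by (rule integrable_subinterval_real[OF int_ch]) (use c in auto)
    have split: "integral {a..c} F + integral {c..c + h} F = integral {a..c + h} F"
      by (rule Henstock_Kurzweil_Integration.integral_combine[OF c(1,2) int_ch])
    have "integral {c..c + h} (\<lambda>t. F t - F c) = integral {c..c + h} F - h * F c"
      using integral_diff[OF int_c integrable_const_ivl[of "F c" c "c + h"]] c h0 by simp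
    moreover have "norm (integral {c..c + h} (\<lambda>t. F t - F c)) \<le> e * measure lborel {c..c + h}"
    proof (rule has_integral_bound_real[OF e0, of "{}"])
      show "((\<lambda>t. F t - F c) has_integral integral {c..c + h} (\<lambda>t. F t - F c)) {c..c + h}"
        using int_c by (intro integrable_integral integrable_diff) auto
      fix t assume "t \<in> {c..c + h} - {}"
      then show "norm (F t - F c) \<le> e" using modulus[of t c] c by (auto simp: h_def)
    qed auto
    ultimately have step: "\<bar>integral {c..c + h} F - h * F c\<bar> \<le> h * e"
      using c h0 by (simp add: algebra_simps)
    have IH: "\<bar>integral {a..c} F - (\<Sum>k<m. h * F (a + real k * h))\<bar> \<le> m * h * e"
      using Suc by (simp add: c_def)
    have "integral {a..a + Suc m * h} F - (\<Sum>k<Suc m. h * F (a + real k * h))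
        = (integral {a..c} F - (\<Sum>k<m. h * F (a + real k * h))) + (integral {c..c + h} F - h * F c)"
      unfolding c(4) split[symmetric] by (simp add: c_def)
    also have "\<bar>\<dots>\<bar> \<le> m * h * e + h * e"
      using IH step by (rule abs_triangle_ineq[THEN order_trans, OF add_mono])
    also have "\<dots> = Suc m * h * e" by (simp add: algebra_simps)
    finally show ?case .
  qed simp
  from this[of n] show ?thesis using hn by (simp add: riemann_sum_def h_def)
qed

lemma uniformly_equicontinuous_on_continuous_on:
  assumes "uniformly_equicontinuous_on K F"
  shows "continuous_on K (\<lambda>t. F t x)"
  unfolding Elementary_Metric_Spaces.continuous_on_iff
proof (intro ballI allI impI)
  fix t and e :: real assume "t \<in> K" "e > 0"
  then obtain d where d: "d > 0" "\<forall>s\<in>K. \<forall>t\<in>K. \<bar>s - t\<bar> < d \<longrightarrow> (\<forall>x. \<bar>F s x - F t x\<bar> \<le> e / 2)"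
    using assms unfolding uniformly_equicontinuous_on_def by (meson half_gt_zero)
  moreover have "dist (F s x) (F t x) < e" if "s \<in> K" "dist s t < d" for s
  proof -
    have "\<bar>F s x - F t x\<bar> \<le> e / 2" using d(2) that \<open>t \<in> K\<close> by (auto simp: dist_real_def)
    then show ?thesis using \<open>e > 0\<close> by (simp add: dist_real_def)
  qed
  ultimately show "\<exists>d>0. \<forall>s\<in>K. dist s t < d \<longrightarrow> dist (F s x) (F t x) < e" by blast
qed

lemma riemann_sum_uniform_convergence:
  assumes ab: "a \<le> b" and equi: "uniformly_equicontinuous_on {a..b} F" and e: "e > 0"
  shows "\<forall>\<^sub>F n in sequentially. \<forall>x. \<bar>integral {a..b} (\<lambda>t. F t x) - riemann_sum a b n (\<lambda>t. F t x)\<bar> \<le> e"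
proof -
  define e' where "e' = e / (b - a + 1)"
  have e': "e' > 0" "(b - a) * e' \<le> e" using e ab by (auto simp: e'_def field_simps)
  obtain d where d: "d > 0" "\<forall>s\<in>{a..b}. \<forall>t\<in>{a..b}. \<bar>s - t\<bar> < d \<longrightarrow> (\<forall>x. \<bar>F s x - F t x\<bar> \<le> e')"
    using equi e' unfolding uniformly_equicontinuous_on_def by blast
  have "((\<lambda>n. (b - a) / real n) \<longlongrightarrow> 0) sequentially"
    by (rule lim_const_over_n)
  then have "\<forall>\<^sub>F n in sequentially. (b - a) / real n < d" using d(1) by (rule order_tendstoD)
  then show ?thesis
    using eventually_gt_at_top[of 0]
  proof eventually_elim
    case (elim n)
    have "\<bar>integral {a..b} (\<lambda>t. F t x) - riemann_sum a b n (\<lambda>t. F t x)\<bar> \<le> (b - a) * e'" for x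
      using elim d by (intro riemann_sum_error ab uniformly_equicontinuous_on_continuous_on[OF equi]) auto
    then show ?case using e'(2) order_trans by blast
  qed
qed

context feller
begin

lemma riemann_sum_Cfun:
  assumes "a \<le> b" "\<And>t. t \<in> {a..b} \<Longrightarrow> F t \<in> Cfun S"
  shows "(\<lambda>x. riemann_sum a b n (\<lambda>t. F t x)) \<in> Cfun S"
  unfolding riemann_sum_def
  using assms riemann_point_in_interval by (intro Cfun_sum Cfun_scale) auto

lemma riemann_sum_commute:
  assumes "h \<ge> 0" "a \<le> b" "\<And>t. t \<in> {a..b} \<Longrightarrow> F t \<in> Cfun S"
  shows "T h (\<lambda>x. riemann_sum a b n (\<lambda>t. F t x)) = (\<lambda>x. riemann_sum a b n (\<lambda>t. T h (F t) x))"
proof -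
  let ?P = "\<lambda>k. a + real k * ((b - a) / n)"
  have PC: "F (?P k) \<in> Cfun S" if "k < n" for k
    using assms(2,3) riemann_point_in_interval that by blast
  have "T h (\<lambda>x. \<Sum>k<n. (b - a) / n * F (?P k) x) = (\<lambda>x. \<Sum>k<n. T h (\<lambda>x. (b - a) / n * F (?P k) x) x)"
    using PC by (intro sum assms(1) Cfun_scale) auto
  also have "\<dots> = (\<lambda>x. \<Sum>k<n. (b - a) / n * T h (F (?P k)) x)"
  proof (intro ext sum.cong refl)
    fix x k assume "k \<in> {..<n}"
    then show "T h (\<lambda>x. (b - a) / n * F (?P k) x) x = (b - a) / n * T h (F (?P k)) x"
      using scale[OF assms(1) PC[of k], of "(b - a) / n"] by simp
  qed
  finally show ?thesis unfolding riemann_sum_def .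
qed

lemma uniformly_equicontinuous_on_semigroup:
  assumes "h \<ge> 0" "\<And>t. t \<in> K \<Longrightarrow> F t \<in> Cfun S" "uniformly_equicontinuous_on K F"
  shows "uniformly_equicontinuous_on K (\<lambda>t. T h (F t))"
  unfolding uniformly_equicontinuous_on_def
proof (intro allI impI)
  fix e :: real assume "e > 0"
  then obtain d where d: "d > 0" "\<forall>s\<in>K. \<forall>t\<in>K. \<bar>s - t\<bar> < d \<longrightarrow> (\<forall>x. \<bar>F s x - F t x\<bar> \<le> e)"
    using assms(3) unfolding uniformly_equicontinuous_on_def by blast
  have "\<bar>T h (F s) x - T h (F t) x\<bar> \<le> e" if "s \<in> K" "t \<in> K" "\<bar>s - t\<bar> < d" for s t x
    using d(2) that \<open>e > 0\<close> by (intro contraction_diff assms(1) assms(2)) auto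
  then show "\<exists>d>0. \<forall>s\<in>K. \<forall>t\<in>K. \<bar>s - t\<bar> < d \<longrightarrow> (\<forall>x. \<bar>T h (F s) x - T h (F t) x\<bar> \<le> e)"
    using d(1) by blast
qed

lemma integral_Cfun:
  assumes "a \<le> b" "\<And>t. t \<in> {a..b} \<Longrightarrow> F t \<in> Cfun S" "uniformly_equicontinuous_on {a..b} F"
  shows "(\<lambda>x. integral {a..b} (\<lambda>t. F t x)) \<in> Cfun S"
proof (rule Cfun_uniform_approx)
  fix e :: real assume "e > 0"
  then obtain n where "\<forall>x. \<bar>integral {a..b} (\<lambda>t. F t x) - riemann_sum a b n (\<lambda>t. F t x)\<bar> \<le> e"
    using riemann_sum_uniform_convergence[OF assms(1,3)] unfolding eventually_sequentially by blast
  moreover have "(\<lambda>x. riemann_sum a b n (\<lambda>t. F t x)) \<in> Cfun S"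
    using assms(1,2) by (rule riemann_sum_Cfun)
  ultimately show "\<exists>f\<in>Cfun S. \<forall>x. \<bar>integral {a..b} (\<lambda>t. F t x) - f x\<bar> \<le> e"
    by (auto intro!: bexI[of _ "\<lambda>x. riemann_sum a b n (\<lambda>t. F t x)"])
qed

text \<open>Both sides are uniform limits of Riemann sums, and \<open>T h\<close> commutes with those and is
  a contraction.\<close>
lemma integral_commute:
  assumes h: "h \<ge> 0" and ab: "a \<le> b" and FC: "\<And>t. t \<in> {a..b} \<Longrightarrow> F t \<in> Cfun S"
    and equi: "uniformly_equicontinuous_on {a..b} F"
  shows "T h (\<lambda>x. integral {a..b} (\<lambda>t. F t x)) = (\<lambda>x. integral {a..b} (\<lambda>t. T h (F t) x))"
proof (rule ext)
  fix x
  define I where "I = (\<lambda>x. integral {a..b} (\<lambda>t. F t x))"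
  define R where "R n = (\<lambda>x. riemann_sum a b n (\<lambda>t. F t x))" for n
  have IC: "I \<in> Cfun S" unfolding I_def using integral_Cfun[OF ab FC equi] .
  have "T h I x = integral {a..b} (\<lambda>t. T h (F t) x)"
  proof (rule eq_0_if_abs_le_all_pos[of "T h I x - _", simplified])
    fix e :: real assume "e > 0"
    then have e2: "e/2 > 0" by simp
    obtain n where n: "\<forall>x. \<bar>I x - R n x\<bar> \<le> e/2"
      "\<forall>x. \<bar>integral {a..b} (\<lambda>t. T h (F t) x) - riemann_sum a b n (\<lambda>t. T h (F t) x)\<bar> \<le> e/2"
      using eventually_conj[OF riemann_sum_uniform_convergence[OF ab equi e2]
          riemann_sum_uniform_convergence[OF ab uniformly_equicontinuous_on_semigroup[of h "{a..b}" F, OF h FC equi] e2]]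
      unfolding I_def R_def eventually_sequentially by blast
    have RC: "R n \<in> Cfun S" unfolding R_def using ab FC by (rule riemann_sum_Cfun)
    have "T h (R n) = (\<lambda>x. riemann_sum a b n (\<lambda>t. T h (F t) x))"
      unfolding R_def using h ab FC by (rule riemann_sum_commute)
    moreover have "\<bar>T h I x - T h (R n) x\<bar> \<le> e/2"
      using n(1) e2 by (intro contraction_diff h IC RC) auto
    ultimately have "\<bar>T h I x - riemann_sum a b n (\<lambda>t. T h (F t) x)\<bar> \<le> e/2" by simp
    then show "\<bar>T h I x - integral {a..b} (\<lambda>t. T h (F t) x)\<bar> \<le> e"
      using n(2)[rule_format, of x] by linarith
  qed
  then show "T h (\<lambda>x. integral {a..b} (\<lambda>t. F t x)) x = integral {a..b} (\<lambda>t. T h (F t) x)"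
    unfolding I_def .
qed

end

section \<open>The Laplace transform of a Feller semigroup\<close>

lemma exp_neg_lipschitz:
  fixes lam :: real
  assumes "0 \<le> s" "0 \<le> t" "lam > 0"
  shows "\<bar>exp (-lam * s) - exp (-lam * t)\<bar> \<le> lam * \<bar>s - t\<bar>"
proof -
  have ordered: "\<bar>exp (-lam * s) - exp (-lam * t)\<bar> \<le> lam * (s - t)" if "0 \<le> t" "t \<le> s" for s t
  proof -
    have "exp (-lam * t) - exp (-lam * s) = exp (-lam * t) * (1 - exp (-lam * (s - t)))"
      by (simp add: algebra_simps flip: exp_add)
    moreover have "exp (-lam * (s - t)) \<le> 1" "1 - lam * (s - t) \<le> exp (-lam * (s - t))"
      using that assms(3) exp_ge_add_one_self[of "-lam * (s - t)"] by auto
    moreover have "exp (-lam * t) \<le> 1" using that assms(3) by simp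
    ultimately show ?thesis
      by (smt (verit) exp_gt_zero mult_left_le_one_le mult_nonneg_nonneg)
  qed
  show ?thesis
    using ordered[of t s] ordered[of s t] assms by (cases "t \<le> s") (auto simp: abs_minus_commute)
qed

lemma exp_neg_tendsto_0:
  fixes lam :: real
  assumes "lam > 0"
  shows "((\<lambda>b. exp (-lam * b)) \<longlongrightarrow> 0) at_top"
proof -
  have "filterlim (\<lambda>b. lam * b) at_top at_top"
    by (rule filterlim_tendsto_pos_mult_at_top[OF tendsto_const assms filterlim_ident])
  then have "filterlim (\<lambda>b. exp (lam * b)) at_top at_top"
    by (rule filterlim_compose[OF exp_at_top])
  then show ?thesis
    using tendsto_inverse_0_at_top by (simp add: exp_minus)
qed

lemma uniformly_equicontinuous_on_subset:
  "uniformly_equicontinuous_on K F \<Longrightarrow> L \<subseteq> K \<Longrightarrow> uniformly_equicontinuous_on L F"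
  unfolding uniformly_equicontinuous_on_def by (meson subsetD)

context feller
begin

definition damped :: "real \<Rightarrow> ('a \<Rightarrow> real) \<Rightarrow> real \<Rightarrow> 'a \<Rightarrow> real" where
  "damped lam f t x = exp (-lam * t) * T t f x"

definition laplace_partial :: "real \<Rightarrow> ('a \<Rightarrow> real) \<Rightarrow> real \<Rightarrow> 'a \<Rightarrow> real" where
  "laplace_partial lam f b x = integral {0..b} (\<lambda>t. damped lam f t x)"

definition laplace :: "real \<Rightarrow> ('a \<Rightarrow> real) \<Rightarrow> 'a \<Rightarrow> real" where
  "laplace lam f x = lim (\<lambda>n. laplace_partial lam f (real n) x)"

context
  fixes lam :: real and f :: "'a \<Rightarrow> real" and B :: real
  assumes lam: "lam > 0" and fC: "f \<in> Cfun S" and fB: "\<And>x. \<bar>f x\<bar> \<le> B"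
begin

lemma bound_nonneg: "0 \<le> B"
  using fB order_trans abs_ge_zero by blast

lemma semigroup_bound: "t \<ge> 0 \<Longrightarrow> \<bar>T t f x\<bar> \<le> B"
  using fB bound_nonneg by (intro contraction fC) auto

lemma damped_bound: "t \<ge> 0 \<Longrightarrow> \<bar>damped lam f t x\<bar> \<le> B * exp (-lam * t)"
  using semigroup_bound by (simp add: damped_def abs_mult mult.commute)

lemma damped_Cfun: "t \<ge> 0 \<Longrightarrow> damped lam f t \<in> Cfun S"
  unfolding damped_def[abs_def] using Cfun_closed[OF _ fC] by (intro Cfun_scale)

lemma damped_equicontinuous: "uniformly_equicontinuous_on {0..} (damped lam f)"
  unfolding uniformly_equicontinuous_on_def
proof (intro allI impI)
  fix e :: real assume "e > 0"
  obtain d1 where d1: "d1 > 0"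
    "\<And>s t x. 0 \<le> s \<Longrightarrow> 0 \<le> t \<Longrightarrow> \<bar>s - t\<bar> < d1 \<Longrightarrow> \<bar>T s f x - T t f x\<bar> \<le> e/2"
    using uniformly_continuous_in_time[OF fC, of "e/2"] \<open>e > 0\<close> by auto
  define d2 where "d2 = e / (2 * (lam * B + 1))"
  have "0 \<le> lam * B" using lam bound_nonneg by simp
  then have lB: "lam * B + 1 > 0" by linarith
  have d2: "d2 > 0" "lam * d2 * B \<le> e/2"
    using \<open>e > 0\<close> lB by (auto simp: d2_def field_simps)
  have "\<bar>damped lam f s x - damped lam f t x\<bar> \<le> e"
    if st: "0 \<le> s" "0 \<le> t" "\<bar>s - t\<bar> < min d1 d2" for s t x
  proof -
    have "damped lam f s x - damped lam f t x
        = (exp (-lam * s) - exp (-lam * t)) * T s f x + exp (-lam * t) * (T s f x - T t f x)"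
      by (simp add: damped_def algebra_simps)
    moreover have "\<bar>(exp (-lam * s) - exp (-lam * t)) * T s f x\<bar> \<le> lam * d2 * B"
      unfolding abs_mult
      using exp_neg_lipschitz[OF st(1,2) lam] semigroup_bound[OF st(1)] st lam
      by (intro mult_mono) (auto intro: order_trans)
    moreover have "\<bar>exp (-lam * t) * (T s f x - T t f x)\<bar> \<le> 1 * (e/2)"
      unfolding abs_mult using d1(2)[OF st(1,2)] st lam by (intro mult_mono) auto
    ultimately show ?thesis using d2(2) by linarith
  qed
  then show "\<exists>d>0. \<forall>s\<in>{0..}. \<forall>t\<in>{0..}. \<bar>s - t\<bar> < d \<longrightarrow> (\<forall>x. \<bar>damped lam f s x - damped lam f t x\<bar> \<le> e)"
    using d1(1) d2(1) by (intro exI[of _ "min d1 d2"]) auto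
qed

lemma damped_equicontinuous_on: "0 \<le> a \<Longrightarrow> uniformly_equicontinuous_on {a..b} (damped lam f)"
  using damped_equicontinuous by (rule uniformly_equicontinuous_on_subset) auto

lemma damped_integrable: "0 \<le> a \<Longrightarrow> (\<lambda>t. damped lam f t x) integrable_on {a..b}"
  using uniformly_equicontinuous_on_continuous_on[OF damped_equicontinuous_on]
  by (intro integrable_continuous_interval)

lemma laplace_partial_Cfun: "b \<ge> 0 \<Longrightarrow> laplace_partial lam f b \<in> Cfun S"
  unfolding laplace_partial_def[abs_def]
  using damped_Cfun by (intro integral_Cfun damped_equicontinuous_on) auto

lemma laplace_partial_diff:
  "0 \<le> b \<Longrightarrow> b \<le> b' \<Longrightarrow>
    laplace_partial lam f b' x - laplace_partial lam f b x = integral {b..b'} (\<lambda>t. damped lam f t x)"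
  using Henstock_Kurzweil_Integration.integral_combine[of 0 b b' "\<lambda>t. damped lam f t x"]
    damped_integrable[of 0 x b']
  by (simp add: laplace_partial_def)

lemma laplace_partial_tail:
  assumes "0 \<le> b" "b \<le> b'"
  shows "\<bar>laplace_partial lam f b' x - laplace_partial lam f b x\<bar> \<le> B * exp (-lam * b) / lam"
proof -
  have exp_int: "((\<lambda>t. B * exp (-lam * t)) has_integral
      (B * exp (-lam * b) / lam - B * exp (-lam * b') / lam)) {b..b'}"
  proof -
    have "((\<lambda>t. - B * exp (-lam * t) / lam) has_real_derivative (B * exp (-lam * t))) (at t within {b..b'})"
      for t using lam by (auto intro!: derivative_eq_intros)
    then show ?thesis
      using fundamental_theorem_of_calculus[OF assms(2), of "\<lambda>t. - B * exp (-lam * t) / lam"]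
      by (simp add: has_real_derivative_iff_has_vector_derivative)
  qed
  have "\<bar>integral {b..b'} (\<lambda>t. damped lam f t x)\<bar> \<le> integral {b..b'} (\<lambda>t. B * exp (-lam * t))"
    using damped_integrable[OF assms(1)] exp_int damped_bound assms(1)
    by (intro Henstock_Kurzweil_Integration.integral_norm_bound_integral[where f="\<lambda>t. damped lam f t x", simplified])
      auto
  also have "\<dots> \<le> B * exp (-lam * b) / lam"
    using integral_unique[OF exp_int] bound_nonneg lam by simp
  finally show ?thesis using laplace_partial_diff[OF assms] by simp
qed

lemma laplace_tail_tendsto_0: "((\<lambda>b. B * exp (-lam * b) / lam) \<longlongrightarrow> 0) at_top"
  using exp_neg_tendsto_0[OF lam] by (auto intro: tendsto_divide_zero tendsto_mult_right_zero)

lemma laplace_tail: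
  assumes "b \<ge> 0"
  shows "\<bar>laplace lam f x - laplace_partial lam f b x\<bar> \<le> B * exp (-lam * b) / lam"
proof -
  let ?G = "\<lambda>n. laplace_partial lam f (real n) x"
  have tail_0: "((\<lambda>n. B * exp (-lam * real n) / lam) \<longlongrightarrow> 0) sequentially"
    using filterlim_compose[OF laplace_tail_tendsto_0 filterlim_real_sequentially] by simp
  have "Cauchy ?G"
  proof (rule CauchyI)
    fix e :: real assume "e > 0"
    then obtain M where M: "B * exp (-lam * real M) / lam < e"
      using order_tendstoD(2)[OF tail_0] unfolding eventually_sequentially by blast
    have "\<bar>?G m - ?G n\<bar> < e" if "M \<le> m" "M \<le> n" for m n
    proof -
      have "\<bar>?G m - ?G n\<bar> \<le> B * exp (-lam * real (min m n)) / lam"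
        using laplace_partial_tail[of "real n" "real m" x] laplace_partial_tail[of "real m" "real n" x]
        by (cases "n \<le> m") (auto simp: abs_minus_commute min_def)
      also have "\<dots> \<le> B * exp (-lam * real M) / lam"
        using that lam bound_nonneg by (auto intro!: divide_right_mono mult_left_mono)
      finally show ?thesis using M by simp
    qed
    then show "\<exists>M. \<forall>m\<ge>M. \<forall>n\<ge>M. norm (?G m - ?G n) < e" by auto
  qed
  then have "?G \<longlonglongrightarrow> laplace lam f x"
    by (simp add: laplace_def Cauchy_convergent_iff convergent_LIMSEQ_iff)
  moreover obtain N :: nat where "b \<le> real N" using real_arch_simple by blast
  then have "\<forall>n\<ge>N. \<bar>?G n - laplace_partial lam f b x\<bar> \<le> B * exp (-lam * b) / lam"
    using assms by (intro allI impI laplace_partial_tail) auto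
  ultimately show ?thesis
    by (intro LIMSEQ_le_const2[where X="\<lambda>n. \<bar>?G n - laplace_partial lam f b x\<bar>"] tendsto_intros) auto
qed

lemma laplace_Cfun: "laplace lam f \<in> Cfun S"
proof (rule Cfun_uniform_approx)
  fix e :: real assume "e > 0"
  obtain b where b: "b \<ge> 0" "B * exp (-lam * b) / lam < e"
    using order_tendstoD(2)[OF laplace_tail_tendsto_0 \<open>e > 0\<close>] eventually_ge_at_top[of 0]
    by (metis (mono_tags, lifting) eventually_conj eventually_happens' trivial_limit_at_top_linorder)
  then have "\<forall>x. \<bar>laplace lam f x - laplace_partial lam f b x\<bar> \<le> e"
    using laplace_tail by (meson less_imp_le order_trans)
  then show "\<exists>g\<in>Cfun S. \<forall>x. \<bar>laplace lam f x - g x\<bar> \<le> e"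
    using laplace_partial_Cfun[OF b(1)] by blast
qed


lemma laplace_partial_tendsto: "((\<lambda>b. laplace_partial lam f b x) \<longlongrightarrow> laplace lam f x) at_top"
proof (rule LIM_zero_cancel, rule Lim_null_comparison[OF _ laplace_tail_tendsto_0])
  show "\<forall>\<^sub>F b in at_top. norm (laplace_partial lam f b x - laplace lam f x) \<le> B * exp (-lam * b) / lam"
    using eventually_ge_at_top[of 0]
    by eventually_elim (use laplace_tail in \<open>auto simp: abs_minus_commute\<close>)
qed

lemma semigroup_damped:
  assumes "h \<ge> 0" "t \<ge> 0"
  shows "T h (damped lam f t) = (\<lambda>x. exp (lam * h) * damped lam f (h + t) x)"
proof -
  have "T h (damped lam f t) = (\<lambda>x. exp (-lam * t) * T h (T t f) x)"
    unfolding damped_def[abs_def] using scale[OF assms(1) Cfun_closed[OF assms(2) fC]] .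
  also have "\<dots> = (\<lambda>x. exp (-lam * t) * T (h + t) f x)"
    using semigroup_law[OF assms fC] by simp
  also have "\<dots> = (\<lambda>x. exp (lam * h) * damped lam f (h + t) x)"
    by (simp add: damped_def fun_eq_iff mult.assoc[symmetric] exp_add[symmetric] algebra_simps)
  finally show ?thesis .
qed

lemma semigroup_laplace_partial:
  assumes "h \<ge> 0" "b \<ge> 0"
  shows "T h (laplace_partial lam f b) x
    = exp (lam * h) * (laplace_partial lam f (b + h) x - laplace_partial lam f h x)"
proof -
  have FC: "\<And>t. t \<in> {0..b} \<Longrightarrow> damped lam f t \<in> Cfun S" using damped_Cfun by simp
  have "T h (laplace_partial lam f b) = (\<lambda>x. integral {0..b} (\<lambda>t. T h (damped lam f t) x))"
    unfolding laplace_partial_def[abs_def]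
    using assms(1,2) FC damped_equicontinuous_on[OF order_refl] by (rule integral_commute)
  then have "T h (laplace_partial lam f b) x = integral {0..b} (\<lambda>t. T h (damped lam f t) x)" by simp
  also have "\<dots> = integral {0..b} (\<lambda>t. exp (lam * h) * damped lam f (h + t) x)"
  proof (rule integral_cong)
    fix t assume "t \<in> {0..b}"
    then show "T h (damped lam f t) x = exp (lam * h) * damped lam f (h + t) x"
      using semigroup_damped[OF assms(1), of t] by simp
  qed
  also have "\<dots> = exp (lam * h) * integral {0..b} (\<lambda>t. damped lam f (h + t) x)"
    by (rule integral_mult_right)
  also have "integral {0..b} (\<lambda>t. damped lam f (h + t) x) = integral {h..b + h} (\<lambda>t. damped lam f t x)"
    using integral_shift_Icc_real[of 0 b "\<lambda>t. damped lam f t x" h] by (simp add: comp_def add.commute)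
  also have "\<dots> = laplace_partial lam f (b + h) x - laplace_partial lam f h x"
    using laplace_partial_diff[of h "b + h" x] assms by simp
  finally show ?thesis .
qed

lemma semigroup_laplace:
  assumes h: "h \<ge> 0"
  shows "T h (laplace lam f) x = exp (lam * h) * (laplace lam f x - laplace_partial lam f h x)"
proof (rule tendsto_unique[OF trivial_limit_at_top_linorder])
  show "((\<lambda>b. T h (laplace_partial lam f b) x) \<longlongrightarrow> T h (laplace lam f) x) at_top"
  proof (rule LIM_zero_cancel, rule Lim_null_comparison[OF _ laplace_tail_tendsto_0])
    show "\<forall>\<^sub>F b in at_top. norm (T h (laplace_partial lam f b) x - T h (laplace lam f) x)
        \<le> B * exp (-lam * b) / lam"
      using eventually_ge_at_top[of 0]
    proof eventually_elim
      case (elim b)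
      then show ?case
        using laplace_tail bound_nonneg lam
        by (auto intro!: contraction_diff h laplace_partial_Cfun laplace_Cfun
            simp: abs_minus_commute)
    qed
  qed
  have "filterlim (\<lambda>b. h + b) at_top at_top"
    by (rule filterlim_tendsto_add_at_top[OF tendsto_const filterlim_ident])
  then have "((\<lambda>b. laplace_partial lam f (b + h) x) \<longlongrightarrow> laplace lam f x) at_top"
    using filterlim_compose[OF laplace_partial_tendsto] by (simp add: add.commute)
  then have "((\<lambda>b. exp (lam * h) * (laplace_partial lam f (b + h) x - laplace_partial lam f h x))
      \<longlongrightarrow> exp (lam * h) * (laplace lam f x - laplace_partial lam f h x)) at_top"
    by (intro tendsto_intros)
  moreover have "\<forall>\<^sub>F b in at_top. exp (lam * h) * (laplace_partial lam f (b + h) x - laplace_partial lam f h x)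
      = T h (laplace_partial lam f b) x"
    using eventually_ge_at_top[of 0] by eventually_elim (simp add: semigroup_laplace_partial[OF h])
  ultimately show "((\<lambda>b. T h (laplace_partial lam f b) x)
      \<longlongrightarrow> exp (lam * h) * (laplace lam f x - laplace_partial lam f h x)) at_top"
    by (rule Lim_transform_eventually)
qed

lemma laplace_partial_near_0:
  assumes "e > 0"
  obtains d where "d > 0" "\<And>h x. 0 < h \<Longrightarrow> h < d \<Longrightarrow> \<bar>laplace_partial lam f h x - h * f x\<bar> \<le> e * h"
proof -
  obtain d where d: "d > 0" "\<forall>s\<in>{0..}. \<forall>t\<in>{0..}. \<bar>s - t\<bar> < d \<longrightarrow> (\<forall>x. \<bar>damped lam f s x - damped lam f t x\<bar> \<le> e)"
    using damped_equicontinuous assms unfolding uniformly_equicontinuous_on_def by blast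
  have "\<bar>laplace_partial lam f h x - h * f x\<bar> \<le> e * h" if h: "0 < h" "h < d" for h x
  proof -
    have f0: "damped lam f 0 x = f x" using at_0[OF fC] by (simp add: damped_def)
    have "\<bar>damped lam f t x - f x\<bar> \<le> e" if "t \<in> {0..h}" for t
      using d(2)[rule_format, of t 0 x] that h f0 by auto
    moreover have "(\<lambda>t. damped lam f t x - f x) integrable_on {0..h}"
      using damped_integrable[of 0 x h] by (intro integrable_diff integrable_const_ivl) auto
    ultimately have "norm (integral {0..h} (\<lambda>t. damped lam f t x - f x)) \<le> e * measure lborel {0..h}"
      using assms by (intro has_integral_bound_real[of e "{}"] integrable_integral) auto
    then have "norm (integral {0..h} (\<lambda>t. damped lam f t x - f x)) \<le> e * h"
      using h by simp
    moreover have "integral {0..h} (\<lambda>t. damped lam f t x - f x) = laplace_partial lam f h x - h * f x"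
      using integral_diff[OF damped_integrable[of 0 x h] integrable_const_ivl[of "f x" 0 h]] h
      by (simp add: laplace_partial_def)
    ultimately show ?thesis by simp
  qed
  then show ?thesis using that d(1) by blast
qed

text \<open>For \<open>h > 0\<close> write \<open>E = exp (\<lambda> h)\<close>; then
  \<open>(T h g - g) / h - (\<lambda> g - f) = ((E - 1) / h - \<lambda>) g - E (G h - h f) / h - (E - 1) f\<close>
  with \<open>g\<close> the Laplace transform and \<open>G h\<close> its truncation at \<open>h\<close>, and each term is small.\<close>
lemma laplace_unif_deriv0: "unif_deriv0 S T (laplace lam f) (\<lambda>x. lam * laplace lam f x - f x)"
  unfolding unif_deriv0_def
proof (intro allI impI)
  fix \<epsilon> :: real assume "\<epsilon> > 0"
  let ?g = "laplace lam f" and ?G = "laplace_partial lam f"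
  define K where "K = B / lam + 2 + B"
  have "B / lam \<ge> 0" using bound_nonneg lam by simp
  then have K: "K > 0" using bound_nonneg by (simp add: K_def)
  define e where "e = \<epsilon> / K"
  have e: "e > 0" "e * K = \<epsilon>" using K \<open>\<epsilon> > 0\<close> by (auto simp: e_def)
  have gB: "\<bar>?g x\<bar> \<le> B / lam" for x
    using laplace_tail[OF order_refl, of x] by (simp add: laplace_partial_def)
  have "((\<lambda>h. exp (lam * h)) has_real_derivative lam) (at 0)"
    by (auto intro!: derivative_eq_intros)
  then have "((\<lambda>h. (exp (lam * h) - 1) / h) \<longlongrightarrow> lam) (at 0)"
    by (simp add: has_field_derivative_iff)
  then have ev1: "\<forall>\<^sub>F h in at 0. dist ((exp (lam * h) - 1) / h) lam < e"
    using e(1) by (rule tendstoD)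
  have "((\<lambda>h. exp (lam * h)) \<longlongrightarrow> exp (lam * 0)) (at 0)"
    by (intro tendsto_intros)
  then have ev2: "\<forall>\<^sub>F h in at 0. dist (exp (lam * h)) 1 < min e 1"
    using e(1) by (intro tendstoD) auto
  obtain d1 where d1: "d1 > 0" "\<forall>h. h \<noteq> 0 \<and> dist h 0 < d1 \<longrightarrow>
      dist ((exp (lam * h) - 1) / h) lam < e \<and> dist (exp (lam * h)) 1 < min e 1"
    using eventually_conj[OF ev1 ev2] unfolding eventually_at by blast
  obtain d2 where d2: "d2 > 0" "\<And>h x. 0 < h \<Longrightarrow> h < d2 \<Longrightarrow> \<bar>?G h x - h * f x\<bar> \<le> e * h"
    using laplace_partial_near_0[OF e(1)] by blast
  have "\<bar>(T h ?g x - ?g x) / h - (lam * ?g x - f x)\<bar> \<le> \<epsilon>" if h: "0 < h" "h < min d1 d2" for h x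
  proof -
    define E where "E = exp (lam * h)"
    have E: "\<bar>(E - 1) / h - lam\<bar> \<le> e" "\<bar>E - 1\<bar> \<le> e" "0 < E" "E \<le> 2"
      using d1(2)[rule_format, of h] h by (auto simp: E_def dist_real_def)
    have "\<bar>(?G h x - h * f x) / h\<bar> \<le> e" using d2(2)[of h x] h by (simp add: field_simps)
    then have bound2: "\<bar>E * ((?G h x - h * f x) / h)\<bar> \<le> 2 * e"
      unfolding abs_mult using E by (intro mult_mono) auto
    have bound1: "\<bar>((E - 1) / h - lam) * ?g x\<bar> \<le> e * (B / lam)"
      unfolding abs_mult using E gB e by (intro mult_mono) auto
    have bound3: "\<bar>(E - 1) * f x\<bar> \<le> e * B"
      unfolding abs_mult using E fB e by (intro mult_mono) auto
    have Tg: "T h ?g x = E * (?g x - ?G h x)" using semigroup_laplace[of h x] h by (simp add: E_def)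
    have "(T h ?g x - ?g x) / h - (lam * ?g x - f x)
        = ((E - 1) / h - lam) * ?g x - E * ((?G h x - h * f x) / h) - (E - 1) * f x"
      unfolding Tg using h by (simp add: diff_divide_distrib add_divide_distrib algebra_simps)
    also have "\<bar>\<dots>\<bar> \<le> \<bar>((E - 1) / h - lam) * ?g x\<bar> + \<bar>E * ((?G h x - h * f x) / h)\<bar> + \<bar>(E - 1) * f x\<bar>"
      by (rule order_trans[OF abs_triangle_ineq4 add_right_mono[OF abs_triangle_ineq4]])
    also have "\<dots> \<le> e * K"
      using bound1 bound2 bound3 by (simp add: K_def distrib_left)
    finally have "\<bar>(T h ?g x - ?g x) / h - (lam * ?g x - f x)\<bar> \<le> e * K" .
    then show ?thesis using e(2) by simp
  qed
  then show "\<exists>d>0. \<forall>h. 0 < h \<and> h < d \<longrightarrow> (\<forall>x\<in>S. \<bar>(T h ?g x - ?g x) / h - (lam * ?g x - f x)\<bar> \<le> \<epsilon>)"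
    using d1(1) d2(1) by (intro exI[of _ "min d1 d2"]) auto
qed

end

end

context feller_generator_on
begin

lemma resolvent_solves:
  assumes "compact S" "lam > 0" "f \<in> Cfun S"
  shows "resolvent A D lam f \<in> D" "(\<lambda>x. lam * resolvent A D lam f x - A (resolvent A D lam f) x) = f"
proof -
  obtain B where B: "\<And>x. \<bar>f x\<bar> \<le> B" using Cfun_bounded[OF assms(1,3)] by blast
  let ?g = "laplace lam f"
  have "(\<lambda>x. lam * ?g x - f x) \<in> Cfun S"
    using Cfun_lincomb[OF laplace_Cfun[OF assms(2,3) B] assms(3), of lam "-1"] by simp
  then have gD: "?g \<in> D" and Ag: "A ?g = (\<lambda>x. lam * ?g x - f x)"
    using domainI[OF laplace_Cfun[OF assms(2,3) B] _ laplace_unif_deriv0[OF assms(2,3) B]] by auto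
  then have "(\<lambda>x. lam * ?g x - A ?g x) = f" by simp
  then have "resolvent A D lam f = ?g" by (rule resolvent_eqI[OF assms(1,2) gD])
  then show "resolvent A D lam f \<in> D" "(\<lambda>x. lam * resolvent A D lam f x - A (resolvent A D lam f) x) = f"
    using gD \<open>(\<lambda>x. lam * ?g x - A ?g x) = f\<close> by simp_all
qed

lemma resolvent_sum:
  assumes "compact S" "lam > 0" "finite J" "\<And>j. j \<in> J \<Longrightarrow> f j \<in> Cfun S"
  shows "resolvent A D lam (\<lambda>x. \<Sum>j\<in>J. f j x) = (\<lambda>x. \<Sum>j\<in>J. resolvent A D lam (f j) x)"
proof (rule resolvent_eqI[OF assms(1,2)])
  let ?r = "\<lambda>j. resolvent A D lam (f j)"
  have "(\<lambda>x. \<Sum>j\<in>J. ?r j x) \<in> D \<and> A (\<lambda>x. \<Sum>j\<in>J. ?r j x) = (\<lambda>x. \<Sum>j\<in>J. A (?r j) x)"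
    using resolvent_solves(1)[OF assms(1,2) assms(4)] by (intro domain_sum assms(3))
  moreover have "lam * ?r j x - A (?r j) x = f j x" if "j \<in> J" for j x
    using resolvent_solves(2)[OF assms(1,2) assms(4)[OF that]] by (auto dest: fun_cong[of _ _ x])
  ultimately show "(\<lambda>x. \<Sum>j\<in>J. ?r j x) \<in> D"
    "(\<lambda>x. lam * (\<Sum>j\<in>J. ?r j x) - A (\<lambda>x. \<Sum>j\<in>J. ?r j x) x) = (\<lambda>x. \<Sum>j\<in>J. f j x)"
    by (auto simp: sum_distrib_left simp flip: sum_subtractf intro!: sum.cong)
qed

end

section \<open>Sup-norm contractions on finitely indexed vectors\<close>

lemma supnorm_on_ge: "finite I \<Longrightarrow> ij \<in> I \<Longrightarrow> \<bar>w ij\<bar> \<le> supnorm_on I w"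
  unfolding supnorm_on_def by (intro Max_ge) auto

lemma supnorm_on_nonneg: "finite I \<Longrightarrow> 0 \<le> supnorm_on I w"
  unfolding supnorm_on_def by (intro Max_ge) auto

lemma supnorm_on_le: "finite I \<Longrightarrow> 0 \<le> B \<Longrightarrow> (\<And>ij. ij \<in> I \<Longrightarrow> \<bar>w ij\<bar> \<le> B) \<Longrightarrow> supnorm_on I w \<le> B"
  unfolding supnorm_on_def by (subst Max_le_iff) auto

lemma supnorm_on_cong: "(\<And>ij. ij \<in> I \<Longrightarrow> w ij = w' ij) \<Longrightarrow> supnorm_on I w = supnorm_on I w'"
  unfolding supnorm_on_def by (metis (mono_tags, lifting) image_cong)

lemma supnorm_on_le_mult_imp_0:
  assumes "finite I" "c < 1" "supnorm_on I w \<le> c * supnorm_on I w" "ij \<in> I"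
  shows "w ij = 0"
proof -
  have "supnorm_on I w \<le> 0"
    using assms(2,3) supnorm_on_nonneg[OF assms(1), of w] by (smt (verit) mult_le_cancel_right1)
  then show ?thesis using supnorm_on_ge[OF assms(1,4), of w] by simp
qed

definition matvec :: "(nat \<times> nat) set \<Rightarrow> (nat \<times> nat \<Rightarrow> nat \<times> nat \<Rightarrow> real) \<Rightarrow> (nat \<times> nat \<Rightarrow> real)
    \<Rightarrow> nat \<times> nat \<Rightarrow> real" where
  "matvec I C w = (\<lambda>ij. if ij \<in> I then (\<Sum>kl\<in>I. C ij kl * w kl) else 0)"

lemma matvec_lincomb:
  "ij \<in> I \<Longrightarrow> matvec I C (\<lambda>kl. a * w1 kl + b * w2 kl) ij = a * matvec I C w1 ij + b * matvec I C w2 ij"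
  by (simp add: matvec_def sum.distrib sum_distrib_left algebra_simps)

lemma matvec_mono:
  "(\<And>kl. kl \<in> I \<Longrightarrow> 0 \<le> C ij kl) \<Longrightarrow> (\<And>kl. kl \<in> I \<Longrightarrow> w1 kl \<le> w2 kl) \<Longrightarrow> matvec I C w1 ij \<le> matvec I C w2 ij"
  by (auto simp: matvec_def intro!: sum_mono mult_left_mono)

locale supnorm_contraction =
  fixes I :: "(nat \<times> nat) set" and C :: "nat \<times> nat \<Rightarrow> nat \<times> nat \<Rightarrow> real" and c :: real
  assumes finite: "finite I" and c_nonneg: "0 \<le> c" and c_less_1: "c < 1"
    and contraction: "\<And>w. supnorm_on I (matvec I C w) \<le> c * supnorm_on I w"
begin

lemma fixed_point_0:
  assumes "\<And>ij. ij \<in> I \<Longrightarrow> w ij = matvec I C w ij" "ij \<in> I"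
  shows "w ij = 0"
proof (rule supnorm_on_le_mult_imp_0[OF finite c_less_1 _ assms(2)])
  have "supnorm_on I w = supnorm_on I (matvec I C w)" using assms(1) by (rule supnorm_on_cong)
  then show "supnorm_on I w \<le> c * supnorm_on I w" using contraction[of w] by linarith
qed

lemma fixed_point_unique:
  assumes "\<And>ij. ij \<notin> I \<Longrightarrow> u1 ij = 0" "\<And>ij. ij \<in> I \<Longrightarrow> u1 ij = v ij + matvec I C u1 ij"
    and "\<And>ij. ij \<notin> I \<Longrightarrow> u2 ij = 0" "\<And>ij. ij \<in> I \<Longrightarrow> u2 ij = v ij + matvec I C u2 ij"
  shows "u1 = u2"
proof
  fix ij
  define d where "d = (\<lambda>kl. 1 * u1 kl + (-1) * u2 kl)"
  have "d kl = matvec I C d kl" if "kl \<in> I" for kl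
    using assms(2,4)[OF that] matvec_lincomb[OF that, of C 1 u1 "-1" u2] by (simp add: d_def)
  then have "ij \<in> I \<Longrightarrow> d ij = 0" by (rule fixed_point_0)
  then show "u1 ij = u2 ij" using assms(1,3) by (cases "ij \<in> I") (auto simp: d_def)
qed

text \<open>The Neumann series \<open>\<Sum>\<^sub>n C\<^sup>n v\<close> converges geometrically.\<close>
lemma fixed_point_exists:
  assumes v0: "\<And>ij. ij \<notin> I \<Longrightarrow> v ij = 0"
  obtains u where "\<And>ij. ij \<notin> I \<Longrightarrow> u ij = 0" "\<And>ij. ij \<in> I \<Longrightarrow> u ij = v ij + matvec I C u ij"
proof -
  define P where "P n = (matvec I C ^^ n) v" for n
  have P_Suc: "P (Suc n) = matvec I C (P n)" for n by (simp add: P_def)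
  have P_out: "P n ij = 0" if "ij \<notin> I" for n ij
    using that v0 by (cases n) (simp_all add: P_def matvec_def)
  define K where "K = supnorm_on I v"
  have P_norm: "supnorm_on I (P n) \<le> c ^ n * K" for n
  proof (induction n)
    case (Suc n)
    have "supnorm_on I (P (Suc n)) \<le> c * supnorm_on I (P n)" using contraction by (simp add: P_Suc)
    also have "\<dots> \<le> c * (c ^ n * K)" using Suc c_nonneg by (intro mult_left_mono) auto
    finally show ?case by simp
  qed (simp add: P_def K_def)
  have P_bound: "\<bar>P n ij\<bar> \<le> K * c ^ n" for n ij
  proof (cases "ij \<in> I")
    case True
    then show ?thesis using order_trans[OF supnorm_on_ge[OF finite True] P_norm] by (simp add: mult.commute)
  next
    case False
    then show ?thesis using P_out supnorm_on_nonneg[OF finite, of v] c_nonneg by (simp add: K_def)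
  qed
  have summable: "summable (\<lambda>n. P n ij)" for ij
  proof (rule summable_comparison_test')
    show "summable (\<lambda>n. K * c ^ n)" using c_nonneg c_less_1 by (intro summable_mult summable_geometric) auto
    show "norm (P n ij) \<le> K * c ^ n" for n using P_bound by simp
  qed
  define u where "u ij = (\<Sum>n. P n ij)" for ij
  have "u ij = v ij + matvec I C u ij" if ij: "ij \<in> I" for ij
  proof -
    have "matvec I C u ij = (\<Sum>kl\<in>I. \<Sum>n. C ij kl * P n kl)"
      using ij summable by (simp add: matvec_def u_def suminf_mult)
    also have "\<dots> = (\<Sum>n. \<Sum>kl\<in>I. C ij kl * P n kl)"
      using summable by (intro suminf_sum[symmetric] summable_mult)
    also have "\<dots> = (\<Sum>n. P (Suc n) ij)" using ij by (simp add: P_Suc matvec_def)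
    also have "\<dots> = u ij - P 0 ij" unfolding u_def by (rule suminf_split_head[OF summable])
    finally show ?thesis by (simp add: P_def)
  qed
  moreover have "u ij = 0" if "ij \<notin> I" for ij by (simp add: u_def P_out[OF that])
  ultimately show ?thesis using that by blast
qed

text \<open>Maximum principle: the positive part \<open>w\<^sup>+\<close> satisfies \<open>w\<^sup>+ \<le> C w\<^sup>+\<close>, so its sup norm is at
  most \<open>c\<close> times itself.\<close>
lemma fixed_point_nonpos:
  assumes C_nonneg: "\<And>ij kl. ij \<in> I \<Longrightarrow> kl \<in> I \<Longrightarrow> 0 \<le> C ij kl"
    and fixed: "\<And>ij. ij \<in> I \<Longrightarrow> w ij = r ij + matvec I C w ij"
    and r_nonpos: "\<And>ij. ij \<in> I \<Longrightarrow> r ij \<le> 0"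
    and ij: "ij \<in> I"
  shows "w ij \<le> 0"
proof -
  define wp where "wp kl = max (w kl) 0" for kl
  define m where "m = supnorm_on I wp"
  have "\<bar>wp kl\<bar> \<le> c * m" if kl: "kl \<in> I" for kl
  proof -
    have "w kl \<le> matvec I C wp kl"
      using fixed[OF kl] r_nonpos[OF kl] matvec_mono[of I C kl w wp] C_nonneg[OF kl]
      by (fastforce simp: wp_def)
    also have "\<dots> \<le> supnorm_on I (matvec I C wp)" using supnorm_on_ge[OF finite kl, of "matvec I C wp"] by linarith
    also have "\<dots> \<le> c * m" using contraction by (simp add: m_def)
    finally show ?thesis
      using c_nonneg supnorm_on_nonneg[OF finite, of wp] by (simp add: wp_def m_def)
  qed
  then have "m \<le> c * m"
    unfolding m_def using c_nonneg supnorm_on_nonneg[OF finite]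
    by (intro supnorm_on_le[OF finite]) (auto simp: m_def)
  then have "wp ij = 0" unfolding m_def by (rule supnorm_on_le_mult_imp_0[OF finite c_less_1 _ ij])
  then show ?thesis by (simp add: wp_def)
qed

end

section \<open>Resolvents on a disjoint union\<close>

lemma feller_generator_resolvent_Cfun:
  fixes S :: "'a::metric_space set"
  assumes "compact S" "feller_generator S A D" "lam > 0" "f \<in> Cfun S"
  shows "resolvent A D lam f \<in> Cfun S"
proof -
  obtain T where "feller_semigroup S T" "generates S T A D"
    using assms(2) unfolding feller_generator_def by blast
  then interpret feller_generator_on S T A D by unfold_locales
  show ?thesis using domain_Cfun[OF resolvent_solves(1)[OF assms(1,3,4)]] .
qed

lemma feller_generator_resolvent_sum:
  fixes S :: "'a::metric_space set"
  assumes "compact S" "feller_generator S A D" "lam > 0" "finite J" "\<And>j. j \<in> J \<Longrightarrow> f j \<in> Cfun S"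
  shows "resolvent A D lam (\<lambda>x. \<Sum>j\<in>J. f j x) = (\<lambda>x. \<Sum>j\<in>J. resolvent A D lam (f j) x)"
proof -
  obtain T where "feller_semigroup S T" "generates S T A D"
    using assms(2) unfolding feller_generator_def by blast
  then interpret feller_generator_on S T A D by unfold_locales
  show ?thesis using resolvent_sum[OF assms(1,3,4,5)] .
qed

lemma set_integral_eq_integral:
  "(\<And>x. x \<notin> A \<Longrightarrow> f x = 0) \<Longrightarrow> (LINT x:A|M. f x) = integral\<^sup>L M f"
  unfolding set_lebesgue_integral_def by (intro arg_cong[where f="integral\<^sup>L M"] ext) (simp add: indicator_def)

lemma IJ_Sigma: "IJ M \<kappa> = Sigma {1..M} (\<lambda>i. {1..\<kappa> i})"
  by (auto simp: IJ_def)

lemma finite_IJ: "finite (IJ M \<kappa>)"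
  by (simp add: IJ_Sigma)

locale feller_disjoint_union =
  fixes S :: "nat \<Rightarrow> 'a::metric_space set"
    and A :: "nat \<Rightarrow> ('a \<Rightarrow> real) \<Rightarrow> ('a \<Rightarrow> real)"
    and D :: "nat \<Rightarrow> ('a \<Rightarrow> real) set"
    and Nn M :: nat and \<kappa> :: "nat \<Rightarrow> nat"
    and \<phi> :: "nat \<Rightarrow> nat \<Rightarrow> 'a \<Rightarrow> real"
    and p :: "nat \<times> nat \<Rightarrow> 'a measure"
  assumes M_le: "M \<le> Nn"
    and compact: "\<And>i. i \<in> {1..Nn} \<Longrightarrow> compact (S i)"
    and disjoint: "\<And>i k. i \<in> {1..Nn} \<Longrightarrow> k \<in> {1..Nn} \<Longrightarrow> i \<noteq> k \<Longrightarrow> S i \<inter> S k = {}"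
    and generator: "\<And>i. i \<in> {1..Nn} \<Longrightarrow> feller_generator (S i) (A i) (D i)"
    and conservative: "\<And>i. i \<in> {M<..Nn} \<Longrightarrow> conservative_generator (S i) (A i) (D i)"
    and \<phi>_Cfun: "\<And>i j. (i, j) \<in> IJ M \<kappa> \<Longrightarrow> \<phi> i j \<in> Cfun (S i)"
    and \<phi>_excessive: "\<And>i j l x. (i, j) \<in> IJ M \<kappa> \<Longrightarrow> l > 0 \<Longrightarrow> x \<in> S i \<Longrightarrow>
      l * resolvent (A i) (D i) l (\<phi> i j) x \<le> \<phi> i j x"
    and partition: "\<And>i. i \<in> {1..M} \<Longrightarrow> (\<lambda>x. \<Sum>j\<in>{1..\<kappa> i}. \<phi> i j x) = indicator (S i)"
    and sets_p: "\<And>ij. ij \<in> IJ M \<kappa> \<Longrightarrow> sets (p ij) = sets (restrict_space borel (\<Union>i\<in>{1..Nn}. S i))"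
    and subprob_p: "\<And>ij. ij \<in> IJ M \<kappa> \<Longrightarrow> emeasure (p ij) (space (p ij)) \<le> 1"
begin

abbreviation Su :: "'a set" where
  "Su \<equiv> \<Union>i\<in>{1..Nn}. S i"

definition Nmat :: "real \<Rightarrow> nat \<times> nat \<Rightarrow> nat \<times> nat \<Rightarrow> real" where
  "Nmat lam ij kl = integral\<^sup>L (p ij) (ell A D \<phi> (fst kl) (snd kl) lam)"

lemma IJ_index: "(k, l) \<in> IJ M \<kappa> \<Longrightarrow> k \<in> {1..Nn}"
  using M_le by (auto simp: IJ_def)

lemma ell_Cfun:
  assumes "(k, l) \<in> IJ M \<kappa>" "lam > 0"
  shows "ell A D \<phi> k l lam \<in> Cfun (S k)"
  using Cfun_lincomb[OF \<phi>_Cfun[OF assms(1)] feller_generator_resolvent_Cfun[OF compact generator assms(2)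
      \<phi>_Cfun[OF assms(1)]], of 1 "-lam"] IJ_index[OF assms(1)]
  by (simp add: ell_def)

lemma ell_nonneg:
  assumes "(k, l) \<in> IJ M \<kappa>" "lam > 0"
  shows "0 \<le> ell A D \<phi> k l lam x"
  using \<phi>_excessive[OF assms] Cfun_outside[OF ell_Cfun[OF assms]] by (cases "x \<in> S k") (auto simp: ell_def)

lemma lambda_resolvent_indicator_conservative:
  assumes "i \<in> {M<..Nn}" "lam > 0"
  shows "lam * resolvent (A i) (D i) lam (indicator (S i)) x = indicator (S i) x"
proof -
  have "i \<in> {1..Nn}" using assms(1) by auto
  then show ?thesis
    using resolvent_conservative[OF compact[OF \<open>i \<in> {1..Nn}\<close>] assms(2) conservative[OF assms(1)]] assms(2) by simp
qed

lemma lambda_resolvent_indicator_partition: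
  assumes i: "i \<in> {1..M}" and lam: "lam > 0"
  shows "lam * resolvent (A i) (D i) lam (indicator (S i)) x
    = indicator (S i) x - (\<Sum>j\<in>{1..\<kappa> i}. ell A D \<phi> i j lam x)"
proof -
  have ij: "(i, j) \<in> IJ M \<kappa>" if "j \<in> {1..\<kappa> i}" for j using i that by (simp add: IJ_def)
  have iN: "i \<in> {1..Nn}" using i M_le by simp
  have "resolvent (A i) (D i) lam (indicator (S i)) = (\<lambda>x. \<Sum>j\<in>{1..\<kappa> i}. resolvent (A i) (D i) lam (\<phi> i j) x)"
    unfolding partition[OF i, symmetric]
    by (rule feller_generator_resolvent_sum[OF compact[OF iN] generator[OF iN] lam]) (use \<phi>_Cfun ij in auto)
  then have "lam * resolvent (A i) (D i) lam (indicator (S i)) x = (\<Sum>j\<in>{1..\<kappa> i}. \<phi> i j x - ell A D \<phi> i j lam x)"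
    by (simp add: sum_distrib_left ell_def)
  also have "\<dots> = indicator (S i) x - (\<Sum>j\<in>{1..\<kappa> i}. ell A D \<phi> i j lam x)"
    by (simp add: sum_subtractf partition[OF i, symmetric])
  finally show ?thesis .
qed

lemma lambda_Rdu_indicator:
  assumes lam: "lam > 0"
  shows "lam * Rdu S A D Nn lam (indicator Su) x = indicator Su x - (\<Sum>kl\<in>IJ M \<kappa>. ell A D \<phi> (fst kl) (snd kl) lam x)"
proof -
  let ?R = "\<lambda>i. lam * resolvent (A i) (D i) lam (indicator (S i)) x"
  have split: "(\<Sum>i\<in>{1..M}. g i) + (\<Sum>i\<in>{M<..Nn}. g i) = (\<Sum>i\<in>{1..Nn}. g i)" for g :: "nat \<Rightarrow> real"
  proof -
    have "{1..Nn} = {1..M} \<union> {M<..Nn}" "{1..M} \<inter> {M<..Nn} = {}" using M_le by auto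
    then show ?thesis by (simp add: sum.union_disjoint)
  qed
  have sigma: "(\<Sum>i\<in>{1..M}. \<Sum>j\<in>{1..\<kappa> i}. ell A D \<phi> i j lam x) = (\<Sum>kl\<in>IJ M \<kappa>. ell A D \<phi> (fst kl) (snd kl) lam x)"
    unfolding IJ_Sigma by (subst sum.Sigma) (auto simp: case_prod_beta)
  have "(\<lambda>y. indicator (S i) y * indicator Su y) = (indicator (S i) :: 'a \<Rightarrow> real)" if "i \<in> {1..Nn}" for i
    using that by (auto simp: indicator_def fun_eq_iff)
  then have "lam * Rdu S A D Nn lam (indicator Su) x = (\<Sum>i\<in>{1..Nn}. ?R i)"
    by (simp add: Rdu_def sum_distrib_left)
  also have "\<dots> = (\<Sum>i\<in>{1..M}. ?R i) + (\<Sum>i\<in>{M<..Nn}. ?R i)"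
    by (rule split[symmetric])
  also have "\<dots> = (\<Sum>i\<in>{1..M}. indicator (S i) x - (\<Sum>j\<in>{1..\<kappa> i}. ell A D \<phi> i j lam x))
      + (\<Sum>i\<in>{M<..Nn}. indicator (S i) x)"
    using lambda_resolvent_indicator_partition[OF _ lam] lambda_resolvent_indicator_conservative[OF _ lam]
    by simp
  also have "\<dots> = (\<Sum>i\<in>{1..Nn}. indicator (S i) x) - (\<Sum>kl\<in>IJ M \<kappa>. ell A D \<phi> (fst kl) (snd kl) lam x)"
    unfolding split[symmetric] sigma[symmetric] by (simp add: sum_subtractf)
  also have "(\<Sum>i\<in>{1..Nn}. indicator (S i) x) = (indicator Su x :: real)"
    using disjoint by (intro indicator_UN_disjoint[symmetric]) (auto simp: disjoint_family_on_def)
  finally show ?thesis .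
qed

lemma space_p: "ij \<in> IJ M \<kappa> \<Longrightarrow> space (p ij) = Su"
  using sets_eq_imp_space_eq[OF sets_p] by (simp add: space_restrict_space)

lemma finite_measure_p: "ij \<in> IJ M \<kappa> \<Longrightarrow> finite_measure (p ij)"
  using subprob_p[of ij] by (intro finite_measureI) (auto simp: top_unique)

lemma integrable_ell:
  assumes ij: "ij \<in> IJ M \<kappa>" and kl: "(k, l) \<in> IJ M \<kappa>" and lam: "lam > 0"
  shows "integrable (p ij) (ell A D \<phi> k l lam)"
proof -
  let ?e = "ell A D \<phi> k l lam"
  have Sk: "S k \<in> sets borel" using compact[OF IJ_index[OF kl]] by (intro borel_closed compact_imp_closed)
  have "?e = (\<lambda>x. indicator (S k) x *\<^sub>R ?e x)"
    using Cfun_outside[OF ell_Cfun[OF kl lam]] by (auto simp: indicator_def fun_eq_iff)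
  also have "\<dots> \<in> borel_measurable borel"
    using ell_Cfun[OF kl lam] by (intro borel_measurable_continuous_on_indicator[OF Sk]) (auto simp: Cfun_def)
  finally have "?e \<in> borel_measurable (restrict_space borel Su)"
    by (rule measurable_restrict_space1)
  then have "?e \<in> borel_measurable (p ij)"
    using measurable_cong_sets[OF sets_p[OF ij] refl, where 'b=real] by simp
  moreover obtain B where "\<And>x. \<bar>?e x\<bar> \<le> B"
    using Cfun_bounded[OF compact[OF IJ_index[OF kl]] ell_Cfun[OF kl lam]] by blast
  ultimately show ?thesis
    by (intro finite_measure.integrable_const_bound[OF finite_measure_p[OF ij] AE_I2, of ?e B]) simp_all
qed

lemma Nop_eq_matvec: "lam > 0 \<Longrightarrow> Nop S A D M \<kappa> \<phi> p lam w = matvec (IJ M \<kappa>) (Nmat lam) w"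
proof
  fix ij assume lam: "lam > 0"
  have set_int: "(LINT x:S k|p ij. ell A D \<phi> k l lam x) = Nmat lam ij (k, l)" if "(k, l) \<in> IJ M \<kappa>" for k l
    using set_integral_eq_integral[OF Cfun_outside[OF ell_Cfun[OF that lam]]] by (simp add: Nmat_def)
  have "(\<Sum>k\<in>{1..M}. \<Sum>l\<in>{1..\<kappa> k}. w (k, l) * (LINT x:S k|p ij. ell A D \<phi> k l lam x))
      = (\<Sum>k\<in>{1..M}. \<Sum>l\<in>{1..\<kappa> k}. Nmat lam ij (k, l) * w (k, l))"
    using set_int by (intro sum.cong refl) (auto simp: IJ_def mult.commute)
  also have "\<dots> = (\<Sum>kl\<in>IJ M \<kappa>. Nmat lam ij kl * w kl)"
    unfolding IJ_Sigma by (subst sum.Sigma) (auto simp: case_prod_beta)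
  finally show "Nop S A D M \<kappa> \<phi> p lam w ij = matvec (IJ M \<kappa>) (Nmat lam) w ij"
    by (simp add: Nop_def matvec_def)
qed

lemma Nmat_nonneg: "lam > 0 \<Longrightarrow> ij \<in> IJ M \<kappa> \<Longrightarrow> kl \<in> IJ M \<kappa> \<Longrightarrow> 0 \<le> Nmat lam ij kl"
  using ell_nonneg by (auto simp: Nmat_def intro!: integral_nonneg_AE)

lemma lambda_vvec_indicator:
  assumes lam: "lam > 0" and ij: "ij \<in> IJ M \<kappa>"
  shows "lam * vvec S A D Nn M \<kappa> p (indicator Su) lam ij
    = measure (p ij) Su - matvec (IJ M \<kappa>) (Nmat lam) (\<lambda>_. 1) ij"
proof -
  have int_ell: "integrable (p ij) (ell A D \<phi> (fst kl) (snd kl) lam)" if "kl \<in> IJ M \<kappa>" for kl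
    using integrable_ell[OF ij _ lam] that by (cases kl) auto
  have int_ind: "integrable (p ij) (indicator Su :: 'a \<Rightarrow> real)"
    using finite_measure.emeasure_finite[OF finite_measure_p[OF ij], of Su] sets.top[of "p ij"] space_p[OF ij]
    by (intro integrable_real_indicator) (auto simp: less_top)
  have "lam * vvec S A D Nn M \<kappa> p (indicator Su) lam ij
      = integral\<^sup>L (p ij) (\<lambda>x. lam * Rdu S A D Nn lam (indicator Su) x)"
    using ij by (simp add: vvec_def)
  also have "\<dots> = integral\<^sup>L (p ij) (\<lambda>x. indicator Su x - (\<Sum>kl\<in>IJ M \<kappa>. ell A D \<phi> (fst kl) (snd kl) lam x))"
    unfolding lambda_Rdu_indicator[OF lam] ..
  also have "\<dots> = measure (p ij) Su - (\<Sum>kl\<in>IJ M \<kappa>. Nmat lam ij kl)"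
    using int_ind int_ell space_p[OF ij]
    by (simp add: Bochner_Integration.integral_diff Bochner_Integration.integral_sum Nmat_def)
  finally show ?thesis using ij by (simp add: matvec_def)
qed

lemma measure_p_le_1: "ij \<in> IJ M \<kappa> \<Longrightarrow> measure (p ij) Su \<le> 1"
  using subprob_p space_p unfolding measure_def by (intro enn2real_leI) auto

lemma uvec_fixed_point:
  assumes "lam > 0" "supnorm_contraction (IJ M \<kappa>) (Nmat lam) c" "ij \<in> IJ M \<kappa>"
  shows "uvec S A D Nn M \<kappa> \<phi> p f lam ij
    = vvec S A D Nn M \<kappa> p f lam ij + matvec (IJ M \<kappa>) (Nmat lam) (uvec S A D Nn M \<kappa> \<phi> p f lam) ij"
proof -
  interpret supnorm_contraction "IJ M \<kappa>" "Nmat lam" c by (fact assms(2))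
  let ?v = "vvec S A D Nn M \<kappa> p f lam"
  obtain u where u: "\<And>ij. ij \<notin> IJ M \<kappa> \<Longrightarrow> u ij = 0" "\<And>ij. ij \<in> IJ M \<kappa> \<Longrightarrow> u ij = ?v ij + matvec (IJ M \<kappa>) (Nmat lam) u ij"
    using fixed_point_exists[of ?v] by (auto simp: vvec_def)
  have "uvec S A D Nn M \<kappa> \<phi> p f lam = u"
    unfolding uvec_def Nop_eq_matvec[OF assms(1)]
  proof (rule the_equality)
    fix u' assume "(\<forall>ij. ij \<notin> IJ M \<kappa> \<longrightarrow> u' ij = 0) \<and> (\<forall>ij\<in>IJ M \<kappa>. u' ij = ?v ij + matvec (IJ M \<kappa>) (Nmat lam) u' ij)"
    then show "u' = u" using u by (intro fixed_point_unique) auto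
  qed (use u in auto)
  then show ?thesis using u(2)[OF assms(3)] by simp
qed

theorem lambda_uvec_indicator:
  assumes lam: "lam > 0"
    and contr: "\<exists>c<1. \<forall>w. supnorm_on (IJ M \<kappa>) (Nop S A D M \<kappa> \<phi> p lam w) \<le> c * supnorm_on (IJ M \<kappa>) w"
    and ij: "ij \<in> IJ M \<kappa>"
  shows "lam * uvec S A D Nn M \<kappa> \<phi> p (indicator Su) lam ij \<le> measure (p ij) Su"
    and "(\<And>ij. ij \<in> IJ M \<kappa> \<Longrightarrow> measure (p ij) Su = 1) \<Longrightarrow>
      lam * uvec S A D Nn M \<kappa> \<phi> p (indicator Su) lam ij = measure (p ij) Su"
proof -
  obtain c where c: "c < 1" "\<And>w. supnorm_on (IJ M \<kappa>) (matvec (IJ M \<kappa>) (Nmat lam) w) \<le> c * supnorm_on (IJ M \<kappa>) w"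
    using contr Nop_eq_matvec[OF lam] by auto
  have "supnorm_on (IJ M \<kappa>) (matvec (IJ M \<kappa>) (Nmat lam) w) \<le> max c 0 * supnorm_on (IJ M \<kappa>) w" for w
    using c(2)[of w] mult_right_mono[OF max.cobounded1 supnorm_on_nonneg[OF finite_IJ]] by (rule order_trans)
  then interpret supnorm_contraction "IJ M \<kappa>" "Nmat lam" "max c 0"
    using c(1) finite_IJ by unfold_locales auto
  let ?u = "uvec S A D Nn M \<kappa> \<phi> p (indicator Su) lam"
  define w where "w kl = lam * ?u kl + (-1) * 1" for kl
  have w_fixed: "w kl = (measure (p kl) Su - 1) + matvec (IJ M \<kappa>) (Nmat lam) w kl"
    if kl: "kl \<in> IJ M \<kappa>" for kl
    using uvec_fixed_point[OF lam supnorm_contraction_axioms kl] lambda_vvec_indicator[OF lam kl]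
      matvec_lincomb[OF kl, of "Nmat lam" lam ?u "-1" "\<lambda>_. 1"]
    by (simp add: w_def[abs_def] algebra_simps)
  have "w kl \<le> 0" if "kl \<in> IJ M \<kappa>" for kl
    using fixed_point_nonpos[OF Nmat_nonneg[OF lam] w_fixed _ that] measure_p_le_1 by simp
  then have "matvec (IJ M \<kappa>) (Nmat lam) w ij \<le> matvec (IJ M \<kappa>) (Nmat lam) (\<lambda>_. 0) ij"
    using Nmat_nonneg[OF lam ij] by (intro matvec_mono)
  moreover have "matvec (IJ M \<kappa>) (Nmat lam) (\<lambda>_. 0) ij = 0" by (simp add: matvec_def)
  moreover have w_ij: "w ij = lam * ?u ij - 1" by (simp add: w_def)
  ultimately show "lam * ?u ij \<le> measure (p ij) Su"
    using w_fixed[OF ij] by linarith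
  assume q1: "\<And>ij. ij \<in> IJ M \<kappa> \<Longrightarrow> measure (p ij) Su = 1"
  then have "w kl = matvec (IJ M \<kappa>) (Nmat lam) w kl" if "kl \<in> IJ M \<kappa>" for kl
    using w_fixed[OF that] q1[OF that] by linarith
  then have "w ij = 0" using ij by (rule fixed_point_0)
  then show "lam * ?u ij = measure (p ij) Su" using q1[OF ij] w_ij by linarith
qed

end

theorem lemma3:
  fixes S :: "nat \<Rightarrow> 'a::metric_space set"
    and A :: "nat \<Rightarrow> ('a \<Rightarrow> real) \<Rightarrow> ('a \<Rightarrow> real)"
    and D :: "nat \<Rightarrow> ('a \<Rightarrow> real) set"
    and Nn M :: nat and \<kappa> :: "nat \<Rightarrow> nat"
    and \<phi> :: "nat \<Rightarrow> nat \<Rightarrow> 'a \<Rightarrow> real"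
    and p :: "nat \<times> nat \<Rightarrow> 'a measure"
    and lam :: real
  assumes "1 \<le> M" and "M \<le> Nn"
    and "\<forall>i\<in>{1..Nn}. compact (S i)"
    and "\<forall>i\<in>{1..Nn}. \<forall>k\<in>{1..Nn}. i \<noteq> k \<longrightarrow> S i \<inter> S k = {}"
    and "\<forall>i\<in>{1..Nn}. feller_generator (S i) (A i) (D i)"
    and "\<forall>i\<in>{1..M}. \<not> conservative_generator (S i) (A i) (D i)"
    and "\<forall>i\<in>{M<..Nn}. conservative_generator (S i) (A i) (D i)"
    and "\<forall>i\<in>{1..M}. \<forall>f\<in>D i. A i f = (\<lambda>x. 0) \<longrightarrow> f = (\<lambda>x. 0)"
    and "\<forall>(i, j)\<in>IJ M \<kappa>. \<phi> i j \<in> Cfun (S i) \<and> (\<forall>x\<in>S i. 0 \<le> \<phi> i j x \<and> \<phi> i j x \<le> 1)"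
    and "\<forall>(i, j)\<in>IJ M \<kappa>. \<forall>l>0. \<forall>x\<in>S i. l * resolvent (A i) (D i) l (\<phi> i j) x \<le> \<phi> i j x"
    and "\<forall>(i, j)\<in>IJ M \<kappa>. \<forall>l>0. (\<lambda>x. l * resolvent (A i) (D i) l (\<phi> i j) x) \<noteq> \<phi> i j"
    and "\<forall>i\<in>{1..M}. (\<lambda>x. \<Sum>j\<in>{1..\<kappa> i}. \<phi> i j x) = indicator (S i)"
    and "\<forall>ij\<in>IJ M \<kappa>. sets (p ij) = sets (restrict_space borel (\<Union>i\<in>{1..Nn}. S i))
            \<and> emeasure (p ij) (space (p ij)) \<le> 1"
    and "\<forall>l>0. \<exists>c<1. \<forall>w. supnorm_on (IJ M \<kappa>) (Nop S A D M \<kappa> \<phi> p l w) \<le> c * supnorm_on (IJ M \<kappa>) w"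
    and "lam > 0"
  shows "(\<forall>ij\<in>IJ M \<kappa>. lam * uvec S A D Nn M \<kappa> \<phi> p (indicator (\<Union>i\<in>{1..Nn}. S i)) lam ij
              \<le> measure (p ij) (\<Union>i\<in>{1..Nn}. S i))
       \<and> ((\<forall>ij\<in>IJ M \<kappa>. measure (p ij) (\<Union>i\<in>{1..Nn}. S i) = 1) \<longrightarrow>
          (\<forall>ij\<in>IJ M \<kappa>. lam * uvec S A D Nn M \<kappa> \<phi> p (indicator (\<Union>i\<in>{1..Nn}. S i)) lam ij
              = measure (p ij) (\<Union>i\<in>{1..Nn}. S i)))"
proof -
  \<comment> \<open>Only the hypotheses bound into the locale are used: non-conservativity, the trivial kernels
    and \<open>\<lambda> R \<phi> \<noteq> \<phi>\<close> serve in the paper to prove \<open>\<parallel>N\<^sub>\<lambda>\<parallel> < 1\<close>, which is assumed here.\<close>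
  interpret feller_disjoint_union S A D Nn M \<kappa> \<phi> p
  proof
    fix i j l x
    show "M \<le> Nn" by (fact assms(2))
    show "i \<in> {1..Nn} \<Longrightarrow> compact (S i)" using assms(3) by blast
    show "i \<in> {1..Nn} \<Longrightarrow> j \<in> {1..Nn} \<Longrightarrow> i \<noteq> j \<Longrightarrow> S i \<inter> S j = {}" using assms(4) by blast
    show "i \<in> {1..Nn} \<Longrightarrow> feller_generator (S i) (A i) (D i)" using assms(5) by blast
    show "i \<in> {M<..Nn} \<Longrightarrow> conservative_generator (S i) (A i) (D i)" using assms(7) by blast
    show "(i, j) \<in> IJ M \<kappa> \<Longrightarrow> \<phi> i j \<in> Cfun (S i)" using assms(9) by fast
    show "(i, j) \<in> IJ M \<kappa> \<Longrightarrow> l > 0 \<Longrightarrow> x \<in> S i \<Longrightarrow> l * resolvent (A i) (D i) l (\<phi> i j) x \<le> \<phi> i j x"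
      using assms(10) by fast
    show "i \<in> {1..M} \<Longrightarrow> (\<lambda>x. \<Sum>j\<in>{1..\<kappa> i}. \<phi> i j x) = indicator (S i)" using assms(12) by blast
  next
    fix ij assume "ij \<in> IJ M \<kappa>"
    then show "sets (p ij) = sets (restrict_space borel (\<Union>i\<in>{1..Nn}. S i))" "emeasure (p ij) (space (p ij)) \<le> 1"
      using assms(13) by auto
  qed
  show ?thesis
    using lambda_uvec_indicator[OF assms(15)] assms(14,15) by blast
qed

end
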